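(* Consider the stochastic multi-armed bandit data-collection model described in the context, in which each arm $P_k$, $k\in[k^*]$, has a finite mean $\mu_k$. Let $\tau_1\le\tau_2\le\cdots$ be a non-decreasing sequence of random times, and for each $t$ let $\kappa_t\in[k^*]$ be an arm index chosen by a (possibly randomized) choice function based on the data collected up to time $\tau_t$. Then: (i) if $N_{\kappa_t}(\tau_t)\to\infty$ almost surely as $t\to\infty$, then $\hat\mu_{\kappa_t}(\tau_t)-\mu_{\kappa_t}\to 0$ almost surely as $t\to\infty$; (ii) if $N_{\kappa_t}(\tau_t)\to\infty$ in probability as $t\to\infty$, then $\hat\mu_{\kappa_t}(\tau_t)-\mu_{\kappa_t}\to 0$ in probability as $t\to\infty$.
   Context: Fix an integer $k^*\ge1$ and probability distributions (arms) $P_1,\dots,P_{k^*}$ on $\mathbb{R}$ with finite means $\mu_k=\mathbb{E}_{Y\sim P_k}[Y]$. Data are collected as follows: $W$ is a random variable independent of everything else; at each time $t=1,2,\dots$, given the past data $\mathcal{D}_{t-1}=\{W,A_1,Y_1,\dots,A_{t-1},Y_{t-1}\}$, an arm index $A_t\in[k^*]=\{1,\dots,k^*\}$ is drawn from conditional probabilities $\nu_t(k\mid\mathcal{D}_{t-1})$ (an arbitrary, possibly data-dependent, sampling algorithm), and then $Y_t$ is an independent draw from $P_{A_t}$. For $k\in[k^*]$ and $t\ge1$ let $S_k(t)=\sum_{s=1}^t\mathbf{1}(A_s=k)Y_s$, $N_k(t)=\sum_{s=1}^t\mathbf{1}(A_s=k)$, and (whenever $N_k(t)\ge1$) $\hat\mu_k(t)=S_k(t)/N_k(t)$.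 The random times $\tau_t$ are arbitrary random times (not necessarily stopping times). *)

theory Defs
  imports "HOL-Probability.Probability"
begin

definition pulls :: "(nat \<Rightarrow> 'a \<Rightarrow> nat) \<Rightarrow> nat \<Rightarrow> nat \<Rightarrow> 'a \<Rightarrow> nat" where
  "pulls A k t x = card {s \<in> {1..t}. A s x = k}"

definition rsum :: "(nat \<Rightarrow> 'a \<Rightarrow> nat) \<Rightarrow> (nat \<Rightarrow> 'a \<Rightarrow> real) \<Rightarrow> nat \<Rightarrow> nat \<Rightarrow> 'a \<Rightarrow> real" where
  "rsum A Y k t x = (\<Sum>s\<in>{1..t}. (if A s x = k then Y s x else 0))"

text \<open>Empirical mean; when N = 0 this is 0 (Isabelle convention x/0 = 0), irrelevant here.\<close>
definition muhat :: "(nat \<Rightarrow> 'a \<Rightarrow> nat) \<Rightarrow> (nat \<Rightarrow> 'a \<Rightarrow> real) \<Rightarrow> nat \<Rightarrow> nat \<Rightarrow> 'a \<Rightarrow> real" where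
  "muhat A Y k t x = rsum A Y k t x / real (pulls A k t x)"

definition hist_sigma :: "'a measure \<Rightarrow> ('a \<Rightarrow> 'w) \<Rightarrow> 'w measure \<Rightarrow> (nat \<Rightarrow> 'a \<Rightarrow> nat)
    \<Rightarrow> (nat \<Rightarrow> 'a \<Rightarrow> real) \<Rightarrow> nat \<Rightarrow> nat \<Rightarrow> 'a measure" where
  "hist_sigma M W MW A Y ta ty = sigma (space M)
     ({W -` B \<inter> space M | B. B \<in> sets MW}
      \<union> {A s -` B \<inter> space M | s B. 1 \<le> s \<and> s \<le> ta}
      \<union> {Y s -` B \<inter> space M | s B. 1 \<le> s \<and> s \<le> ty \<and> B \<in> sets borel})"

text \<open>The bandit data-collection model: A_t in [k*], and conditionally on
  D_{t-1} = (W, A_1, Y_1, ..., A_{t-1}, Y_{t-1}) and A_t, Y_t has law P_{A_t}.\<close>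
definition bandit_model :: "'a measure \<Rightarrow> nat \<Rightarrow> (nat \<Rightarrow> real measure) \<Rightarrow> ('a \<Rightarrow> 'w) \<Rightarrow> 'w measure
    \<Rightarrow> (nat \<Rightarrow> 'a \<Rightarrow> nat) \<Rightarrow> (nat \<Rightarrow> 'a \<Rightarrow> real) \<Rightarrow> bool" where
  "bandit_model M kstar P W MW A Y \<longleftrightarrow>
     prob_space M \<and> 1 \<le> kstar \<and>
     (\<forall>k\<in>{1..kstar}. prob_space (P k) \<and> sets (P k) = sets borel \<and> integrable (P k) (\<lambda>y. y)) \<and>
     W \<in> M \<rightarrow>\<^sub>M MW \<and>
     (\<forall>t\<ge>1. A t \<in> M \<rightarrow>\<^sub>M count_space UNIV \<and> (\<forall>x\<in>space M. A t x \<in> {1..kstar})) \<and>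
     (\<forall>t\<ge>1. Y t \<in> borel_measurable M) \<and>
     (\<forall>t\<ge>1. \<forall>B\<in>sets borel.
        AE x in M. real_cond_exp M (hist_sigma M W MW A Y t (t - 1)) (indicator (Y t -` B \<inter> space M)) x
                   = measure (P (A t x)) B)"

end

theory Submission
  imports Defs
begin

text \<open>Fix an arm \<open>k\<close> and truncate its \<open>j\<close>-th reward at level \<open>j\<close>, as in the classical proof of the
  strong law. Given the history before round \<open>t\<close>, the reward \<open>Y\<^sub>t\<close> has law \<open>P\<^bsub>A\<^sub>t\<^esub>\<close>, so the
  centred truncated rewards of arm \<open>k\<close> are bounded orthogonal increments. Kolmogorov's maximal
  inequality on the dyadic blocks of the pull count and Borel--Cantelli make their sum \<open>o(N\<^sub>k(t))\<close>.
  Since \<open>\<Sum>\<^sub>n P\<^sub>k(|y| > n) \<le> E|y|\<close>, a.s. only finitely many rewards are affected by the truncation,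
  and the truncated means tend to \<open>\<mu>\<^sub>k\<close> by dominated convergence, hence also in Cesaro mean.
  So a.s. \<open>muhat\<^sub>k(t) \<rightarrow> \<mu>\<^sub>k\<close> whenever \<open>N\<^sub>k(t) \<rightarrow> \<infinity>\<close>. As \<open>N\<^sub>k\<close> is monotone this becomes a bound that
  is uniform in time: for every \<open>\<epsilon>\<close> there is a \<open>c\<close> with \<open>|muhat\<^sub>k(t) - \<mu>\<^sub>k| \<le> \<epsilon>\<close> whenever
  \<open>N\<^sub>k(t) \<ge> c\<close>. With finitely many arms, such a bound survives evaluation at arbitrary random
  indices \<open>(\<kappa>\<^sub>t, \<tau>\<^sub>t)\<close>, which yields both the almost sure claim and the claim in probability.\<close>

lemma cesaro_mean_tendsto_zero:
  fixes a :: "nat \<Rightarrow> real"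
  assumes "a \<longlonglongrightarrow> 0"
  shows "(\<lambda>n. (\<Sum>j<n. a j) / real n) \<longlonglongrightarrow> 0"
proof (rule LIMSEQ_I)
  fix r :: real assume r: "0 < r"
  obtain n0 where n0: "\<And>j. n0 \<le> j \<Longrightarrow> \<bar>a j\<bar> < r / 2"
    using assms r unfolding lim_sequentially by (metis dist_real_def diff_zero half_gt_zero)
  define C where "C = (\<Sum>j<n0. \<bar>a j\<bar>)"
  obtain n1 :: nat where n1: "2 * C / r < real n1" using reals_Archimedean2 by blast
  show "\<exists>no. \<forall>n\<ge>no. norm ((\<Sum>j<n. a j) / real n - 0) < r"
  proof (intro exI allI impI)
    fix n assume n: "max (Suc n0) n1 \<le> n"
    have split: "{..<n} = {..<n0} \<union> {n0..<n}" using n by auto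
    have "\<bar>\<Sum>j<n. a j\<bar> \<le> (\<Sum>j<n. \<bar>a j\<bar>)" by (rule sum_abs)
    also have "\<dots> = C + (\<Sum>j\<in>{n0..<n}. \<bar>a j\<bar>)"
      unfolding C_def split by (subst sum.union_disjoint) auto
    also have "\<dots> \<le> C + (\<Sum>j\<in>{n0..<n}. r / 2)"
      using n0 by (intro add_left_mono sum_mono) (auto intro: less_imp_le)
    also have "\<dots> \<le> C + real n * (r / 2)" using r by simp
    also have "\<dots> < r * real n"
    proof -
      have "2 * C < r * real n1" using n1 r by (simp add: pos_divide_less_eq mult.commute)
      also have "\<dots> \<le> r * real n" using n r by (intro mult_left_mono) auto
      finally show ?thesis by (simp add: field_simps)
    qed
    finally show "norm ((\<Sum>j<n. a j) / real n - 0) < r"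
      using n by (simp add: field_simps)
  qed
qed

lemma cesaro_mean_tendsto:
  fixes a :: "nat \<Rightarrow> real"
  assumes "a \<longlonglongrightarrow> L"
  shows "(\<lambda>n. (\<Sum>j<n. a j) / real n) \<longlonglongrightarrow> L"
proof -
  have "(\<lambda>n. a n - L) \<longlonglongrightarrow> 0" using assms by (simp add: LIM_zero)
  then have "(\<lambda>n. (\<Sum>j<n. a j - L) / real n + L) \<longlonglongrightarrow> 0 + L"
    by (intro tendsto_add cesaro_mean_tendsto_zero tendsto_const)
  moreover have "\<forall>\<^sub>F n in sequentially. (\<Sum>j<n. a j - L) / real n + L = (\<Sum>j<n. a j) / real n"
    using eventually_gt_at_top[of 0] by eventually_elim (simp add: sum_subtractf field_simps)
  ultimately show ?thesis by (simp add: tendsto_cong)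
qed

definition truncate :: "nat \<Rightarrow> real \<Rightarrow> real" where
  "truncate n y = (if \<bar>y\<bar> \<le> real n then y else 0)"

lemma abs_truncate_le: "\<bar>truncate n y\<bar> \<le> real n"
  by (simp add: truncate_def)

lemma truncate_measurable[measurable]: "truncate n \<in> borel_measurable borel"
  unfolding truncate_def by measurable

lemma exists_dyadic_bracket:
  assumes "2 ^ J < (n::nat)"
  shows "\<exists>j\<ge>J. 2 ^ j < n \<and> n \<le> 2 ^ Suc j"
proof -
  define j where "j = (LEAST j. n \<le> 2 ^ Suc j)"
  have "n < 2 ^ n" by (rule less_exp)
  also have "\<dots> \<le> 2 ^ Suc n" by simp
  finally have "n \<le> 2 ^ Suc n" by simp
  then have j: "n \<le> 2 ^ Suc j" unfolding j_def by (rule LeastI)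
  have below: "\<not> n \<le> 2 ^ Suc i" if "i < j" for i
    using not_less_Least[OF that[unfolded j_def]] .
  have "J \<le> j"
  proof (rule ccontr)
    assume "\<not> J \<le> j"
    then have "2 ^ Suc j \<le> (2::nat) ^ J" by (intro power_increasing) auto
    then show False using j assms by linarith
  qed
  moreover have "2 ^ j < n"
    using assms \<open>J \<le> j\<close> below by (cases j) (auto simp: not_le)
  ultimately show ?thesis using j by blast
qed

lemma sum_geometric_tail:
  "(\<Sum>j<J. if j0 \<le> j then (1/2::real) ^ j else 0)
     = (if J \<le> j0 then 0 else 2 * (1/2) ^ j0 - 2 * (1/2) ^ J)"
proof (induction J)
  case (Suc J)
  then show ?case
    by (cases "Suc J \<le> j0"; cases "J = j0") (simp_all add: power_Suc)
qed simp

text \<open>The \<open>j\<close>-th term vanishes unless \<open>|y| \<le> 2^(j+1)\<close>, and the weights \<open>2^-j\<close> of the remaining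
  terms add up to at most \<open>4/|y|\<close>.\<close>
lemma sum_dyadic_truncated_squares_le:
  "(\<Sum>j<J. (1/2::real) ^ j * (truncate (2 ^ Suc j) y)\<^sup>2) \<le> 4 * \<bar>y\<bar>"
proof -
  obtain n :: nat where "\<bar>y\<bar> < 2 ^ n" using real_arch_pow[of 2 "\<bar>y\<bar>"] by auto
  moreover have "(2::real) ^ n \<le> 2 ^ Suc n" by simp
  ultimately have ex: "\<bar>y\<bar> \<le> 2 ^ Suc n" by linarith
  define j0 where "j0 = (LEAST j. \<bar>y\<bar> \<le> 2 ^ Suc j)"
  have j0: "\<bar>y\<bar> \<le> 2 ^ Suc j0" unfolding j0_def using ex by (rule LeastI)
  have vanish: "truncate (2 ^ Suc j) y = 0" if "j < j0" for j
    using not_less_Least[OF that[unfolded j0_def]] by (simp add: truncate_def)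
  have "(\<Sum>j<J. (1/2::real) ^ j * (truncate (2 ^ Suc j) y)\<^sup>2)
      \<le> (\<Sum>j<J. (if j0 \<le> j then (1/2::real) ^ j else 0) * y\<^sup>2)"
  proof (rule sum_mono)
    fix j
    show "(1/2) ^ j * (truncate (2 ^ Suc j) y)\<^sup>2 \<le> (if j0 \<le> j then (1/2) ^ j else 0) * y\<^sup>2"
    proof (cases "j0 \<le> j")
      case False
      then have "truncate (2 ^ Suc j) y = 0" by (intro vanish) simp
      with False show ?thesis by simp
    qed (simp add: truncate_def)
  qed
  also have "\<dots> = (\<Sum>j<J. if j0 \<le> j then (1/2::real) ^ j else 0) * y\<^sup>2"
    by (simp add: sum_distrib_right)
  also have "\<dots> \<le> 2 * (1/2) ^ j0 * y\<^sup>2"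
    by (intro mult_right_mono) (auto simp: sum_geometric_tail)
  also have "\<dots> = 2 * (1/2) ^ j0 * (\<bar>y\<bar> * \<bar>y\<bar>)" by (simp add: power2_eq_square)
  also have "\<dots> \<le> 2 * (1/2) ^ j0 * (\<bar>y\<bar> * 2 ^ Suc j0)"
    by (intro mult_left_mono j0) auto
  also have "\<dots> = 4 * \<bar>y\<bar> * ((1/2) ^ j0 * 2 ^ j0)" by simp
  also have "(1/2::real) ^ j0 * 2 ^ j0 = 1" by (simp add: power_mult_distrib[symmetric])
  finally show ?thesis by simp
qed

lemma sum_exceeded_levels_le: "(\<Sum>j<J. if real (Suc j) < \<bar>y\<bar> then 1 else 0) \<le> \<bar>y\<bar>"
proof -
  have "(\<Sum>j<J. if real (Suc j) < \<bar>y\<bar> then 1 else 0) \<le> real J \<and>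
      (\<Sum>j<J. if real (Suc j) < \<bar>y\<bar> then 1 else 0) \<le> \<bar>y\<bar>"
    by (induction J) auto
  then show ?thesis by simp
qed

lemma eventually_uniform_in_count:
  fixes n :: "nat \<Rightarrow> nat" and a :: "nat \<Rightarrow> real"
  assumes "mono n" and "filterlim n at_top sequentially \<longrightarrow> a \<longlonglongrightarrow> L" and "0 < e"
  shows "eventually (\<lambda>c. \<forall>t. c \<le> real (n t) \<longrightarrow> \<bar>a t - L\<bar> \<le> e) at_top"
proof (cases "filterlim n at_top sequentially")
  case True
  then obtain T where T: "\<And>t. T \<le> t \<Longrightarrow> \<bar>a t - L\<bar> < e"
    using assms(2,3) unfolding lim_sequentially dist_real_def by blast
  have "\<bar>a t - L\<bar> \<le> e" if "real (Suc (n T)) \<le> c" "c \<le> real (n t)" for c t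
  proof -
    have "\<not> t \<le> T" using that monoD[OF assms(1), of t T] by linarith
    then show ?thesis using T[of t] by simp
  qed
  then show ?thesis unfolding eventually_at_top_linorder by blast
next
  case False
  then obtain Z :: nat where Z: "\<not> eventually (\<lambda>t. Z \<le> n t) sequentially"
    unfolding filterlim_at_top by blast
  have "n t < Z" for t
  proof (rule ccontr)
    assume "\<not> n t < Z"
    then have "Z \<le> n s" if "t \<le> s" for s using monoD[OF assms(1) that] by simp
    then have "eventually (\<lambda>t. Z \<le> n t) sequentially" by (rule eventually_sequentiallyI)
    with Z show False ..
  qed
  then have "real (n t) < real Z" for t by simp
  then have "\<not> c \<le> real (n t)" if "real Z \<le> c" for c t
    using that by (meson le_less_trans not_le)
  then show ?thesis unfolding eventually_at_top_linorder by blast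
qed

context prob_space
begin

lemma AE_tendsto_0_if_uniform_in_count:
  fixes f g :: "nat \<Rightarrow> 'a \<Rightarrow> real"
  assumes uniform: "AE x in M. \<forall>e>0. eventually (\<lambda>c. \<forall>t. c \<le> f t x \<longrightarrow> \<bar>g t x\<bar> \<le> e) at_top"
    and count: "AE x in M. filterlim (\<lambda>t. f t x) at_top sequentially"
  shows "AE x in M. (\<lambda>t. g t x) \<longlonglongrightarrow> 0"
  using uniform count
proof eventually_elim
  case (elim x)
  show ?case
  proof (rule tendstoI)
    fix r :: real assume "0 < r"
    then have "eventually (\<lambda>c. \<forall>t. c \<le> f t x \<longrightarrow> \<bar>g t x\<bar> \<le> r / 2) at_top"
      using elim(1) \<open>0 < r\<close> half_gt_zero by blast
    then obtain c where c: "\<forall>t. c \<le> f t x \<longrightarrow> \<bar>g t x\<bar> \<le> r / 2"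
      unfolding eventually_at_top_linorder by blast
    have "eventually (\<lambda>t. c \<le> f t x) sequentially"
      using elim(2) unfolding filterlim_at_top by blast
    then show "eventually (\<lambda>t. dist (g t x) 0 < r) sequentially"
      by eventually_elim (use c \<open>0 < r\<close> in force)
  qed
qed

lemma prob_uniform_in_count_tendsto_1:
  fixes f g :: "nat \<Rightarrow> 'a \<Rightarrow> real"
  assumes uniform: "AE x in M. \<forall>e>0. eventually (\<lambda>c. \<forall>t. c \<le> f t x \<longrightarrow> \<bar>g t x\<bar> \<le> e) at_top"
    and [measurable]: "\<And>t. f t \<in> borel_measurable M" "\<And>t. g t \<in> borel_measurable M"
    and e: "0 < e"
  shows "(\<lambda>m. prob {x \<in> space M. \<forall>t. real m \<le> f t x \<longrightarrow> \<bar>g t x\<bar> \<le> e}) \<longlonglongrightarrow> 1"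
proof -
  define G where "G m = {x \<in> space M. \<forall>t. real m \<le> f t x \<longrightarrow> \<bar>g t x\<bar> \<le> e}" for m :: nat
  have G_sets[measurable]: "G m \<in> sets M" for m unfolding G_def by measurable
  have "AE x in M. x \<in> (\<Union>m. G m)"
    using uniform AE_space
  proof eventually_elim
    case (elim x)
    then obtain c where "\<forall>t. c \<le> f t x \<longrightarrow> \<bar>g t x\<bar> \<le> e"
      using e unfolding eventually_at_top_linorder by blast
    moreover obtain m :: nat where "c \<le> real m" using real_arch_simple by blast
    ultimately have "\<forall>t. real m \<le> f t x \<longrightarrow> \<bar>g t x\<bar> \<le> e" by (meson order_trans)
    then show ?case using elim unfolding G_def by blast
  qed
  then have "prob (\<Union>m. G m) = 1" by (subst AE_in_set_eq_1[symmetric]) auto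
  moreover have "(\<lambda>m. prob (G m)) \<longlonglongrightarrow> prob (\<Union>m. G m)"
  proof (intro Lim_measure_incseq incseq_SucI)
    show "G m \<subseteq> G (Suc m)" for m unfolding G_def by auto
  qed auto
  ultimately show ?thesis by (simp add: G_def)
qed

lemma prob_tendsto_0_if_uniform_in_count:
  fixes f g :: "nat \<Rightarrow> 'a \<Rightarrow> real"
  assumes uniform: "AE x in M. \<forall>e>0. eventually (\<lambda>c. \<forall>t. c \<le> f t x \<longrightarrow> \<bar>g t x\<bar> \<le> e) at_top"
    and [measurable]: "\<And>t. f t \<in> borel_measurable M" "\<And>t. g t \<in> borel_measurable M"
    and count: "\<And>c. (\<lambda>t. prob {x \<in> space M. f t x \<le> c}) \<longlonglongrightarrow> 0"
    and e: "0 < e"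
  shows "(\<lambda>t. prob {x \<in> space M. e < \<bar>g t x\<bar>}) \<longlonglongrightarrow> 0"
proof (rule LIMSEQ_I)
  define G where "G m = {x \<in> space M. \<forall>t. real m \<le> f t x \<longrightarrow> \<bar>g t x\<bar> \<le> e}" for m :: nat
  have G_sets[measurable]: "G m \<in> sets M" for m unfolding G_def by measurable
  have bound: "prob {x \<in> space M. e < \<bar>g t x\<bar>} \<le> prob {x \<in> space M. f t x \<le> real m} + (1 - prob (G m))"
    for t m
  proof -
    have "{x \<in> space M. e < \<bar>g t x\<bar>} \<subseteq> {x \<in> space M. f t x \<le> real m} \<union> (space M - G m)"
    proof safe
      fix x assume "e < \<bar>g t x\<bar>" "x \<in> G m"
      then have "real m \<le> f t x \<longrightarrow> \<bar>g t x\<bar> \<le> e" unfolding G_def by blast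
      with \<open>e < \<bar>g t x\<bar>\<close> show "f t x \<le> real m" by linarith
    qed
    then have "prob {x \<in> space M. e < \<bar>g t x\<bar>} \<le> prob ({x \<in> space M. f t x \<le> real m} \<union> (space M - G m))"
      by (intro finite_measure_mono) auto
    also have "\<dots> \<le> prob {x \<in> space M. f t x \<le> real m} + prob (space M - G m)"
      by (intro measure_Un_le) auto
    finally show ?thesis by (simp add: prob_compl)
  qed
  fix r :: real assume r: "0 < r"
  obtain m where "norm (prob (G m) - 1) < r / 2"
    using LIMSEQ_D[OF prob_uniform_in_count_tendsto_1[OF assms(1-3) e], of "r / 2"] r
    unfolding G_def by auto
  then have m: "1 - prob (G m) < r / 2" by simp
  obtain T where T: "\<And>t. T \<le> t \<Longrightarrow> norm (prob {x \<in> space M. f t x \<le> real m} - 0) < r / 2"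
    using LIMSEQ_D[OF count[of "real m"], of "r / 2"] r by auto
  have "norm (prob {x \<in> space M. e < \<bar>g t x\<bar>} - 0) < r" if "T \<le> t" for t
    using bound[of t m] T[OF that] m by simp
  then show "\<exists>T. \<forall>t\<ge>T. norm (prob {x \<in> space M. e < \<bar>g t x\<bar>} - 0) < r" by blast
qed

end

lemma measurable_random_index:
  fixes h :: "nat \<Rightarrow> nat \<Rightarrow> 'a \<Rightarrow> real"
  assumes "\<And>i n. h i n \<in> borel_measurable M"
    and "\<kappa> \<in> M \<rightarrow>\<^sub>M count_space UNIV" "\<tau> \<in> M \<rightarrow>\<^sub>M count_space UNIV"
  shows "(\<lambda>x. h (\<kappa> x) (\<tau> x) x) \<in> borel_measurable M"
proof -
  have "(\<lambda>x. h i (\<tau> x) x) \<in> borel_measurable M" for i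
    by (rule measurable_compose_countable'[where f="\<lambda>n x. h i n x" and g=\<tau> and I=UNIV])
       (use assms in auto)
  then show ?thesis
    by (rule measurable_compose_countable'[where f="\<lambda>i x. h i (\<tau> x) x" and g=\<kappa> and I=UNIV])
       (use assms in auto)
qed

definition bounded_rv :: "'a measure \<Rightarrow> ('a \<Rightarrow> real) \<Rightarrow> bool" where
  "bounded_rv M f \<longleftrightarrow> f \<in> borel_measurable M \<and> (\<exists>c. \<forall>x\<in>space M. \<bar>f x\<bar> \<le> c)"

lemma bounded_rvI:
  "f \<in> borel_measurable M \<Longrightarrow> (\<And>x. x \<in> space M \<Longrightarrow> \<bar>f x\<bar> \<le> c) \<Longrightarrow> bounded_rv M f"
  unfolding bounded_rv_def by blast

lemma bounded_rv_const: "bounded_rv M (\<lambda>_. c)"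
  by (rule bounded_rvI[where c="\<bar>c\<bar>"]) auto

lemma bounded_rv_add:
  assumes "bounded_rv M f" "bounded_rv M g"
  shows "bounded_rv M (\<lambda>x. f x + g x)"
proof -
  obtain a b where "\<forall>x\<in>space M. \<bar>f x\<bar> \<le> a" "\<forall>x\<in>space M. \<bar>g x\<bar> \<le> b"
    using assms unfolding bounded_rv_def by blast
  then show ?thesis
    using assms by (intro bounded_rvI[where c="a + b"])
      (auto simp: bounded_rv_def intro!: abs_triangle_ineq[THEN order_trans] add_mono)
qed

lemma bounded_rv_mult:
  assumes "bounded_rv M f" "bounded_rv M g"
  shows "bounded_rv M (\<lambda>x. f x * g x)"
proof -
  obtain a b where "\<forall>x\<in>space M. \<bar>f x\<bar> \<le> a" "\<forall>x\<in>space M. \<bar>g x\<bar> \<le> b"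
    using assms unfolding bounded_rv_def by blast
  then show ?thesis
    using assms by (intro bounded_rvI[where c="a * b"])
      (auto simp: bounded_rv_def abs_mult intro!: mult_mono')
qed

lemma bounded_rv_uminus: "bounded_rv M f \<Longrightarrow> bounded_rv M (\<lambda>x. - f x)"
  using bounded_rv_mult[OF bounded_rv_const[where c="- 1"], of M f] by simp

lemma bounded_rv_diff: "bounded_rv M f \<Longrightarrow> bounded_rv M g \<Longrightarrow> bounded_rv M (\<lambda>x. f x - g x)"
  using bounded_rv_add[OF _ bounded_rv_uminus, of M f g] by simp

lemma bounded_rv_power: "bounded_rv M f \<Longrightarrow> bounded_rv M (\<lambda>x. f x ^ n)"
  by (induction n) (auto intro: bounded_rv_const bounded_rv_mult)

lemma bounded_rv_sum:
  "(\<And>i. i \<in> I \<Longrightarrow> bounded_rv M (f i)) \<Longrightarrow> bounded_rv M (\<lambda>x. \<Sum>i\<in>I. f i x)"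
  by (induction I rule: infinite_finite_induct) (auto intro: bounded_rv_const bounded_rv_add)

lemma bounded_rv_max:
  assumes "bounded_rv M f" "bounded_rv M g"
  shows "bounded_rv M (\<lambda>x. max (f x) (g x))"
proof -
  obtain a b where "\<forall>x\<in>space M. \<bar>f x\<bar> \<le> a" "\<forall>x\<in>space M. \<bar>g x\<bar> \<le> b"
    using assms unfolding bounded_rv_def by blast
  then show ?thesis
    using assms by (intro bounded_rvI[where c="max a b"]) (auto simp: bounded_rv_def abs_le_iff)
qed

lemma bounded_rv_compose:
  assumes "bounded_rv N g" "f \<in> M \<rightarrow>\<^sub>M N"
  shows "bounded_rv M (\<lambda>x. g (f x))"
proof -
  obtain c where "\<forall>y\<in>space N. \<bar>g y\<bar> \<le> c" using assms(1) unfolding bounded_rv_def by blast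
  then show ?thesis
    using assms measurable_space[OF assms(2)]
    by (intro bounded_rvI[where c=c]) (auto simp: bounded_rv_def)
qed

lemma bounded_rv_indicator: "A \<in> sets M \<Longrightarrow> bounded_rv M (indicator A)"
  by (rule bounded_rvI[where c=1]) (auto simp: indicator_def)

lemma (in finite_measure) integrable_bounded_rv:
  assumes "bounded_rv M f"
  shows "integrable M f"
proof -
  obtain c where "\<forall>x\<in>space M. \<bar>f x\<bar> \<le> c" "f \<in> borel_measurable M"
    using assms unfolding bounded_rv_def by blast
  then show ?thesis by (intro integrable_const_bound[where B=c]) auto
qed

lemmas bounded_rv_intros =
  bounded_rv_const bounded_rv_uminus bounded_rv_add bounded_rv_diff bounded_rv_mult
  bounded_rv_power bounded_rv_sum bounded_rv_max bounded_rv_indicator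

text \<open>\<open>F s\<close> is the information available before the increment \<open>\<xi> s\<close> is revealed: \<open>\<xi> s\<close> is
  orthogonal to every bounded \<open>F s\<close>-measurable variable, and known at \<open>F (s + 1)\<close>.\<close>
locale orthogonal_increments = prob_space M for M :: "'a measure" +
  fixes F :: "nat \<Rightarrow> 'a measure" and \<xi> :: "nat \<Rightarrow> 'a \<Rightarrow> real"
  assumes subalgebra_F: "\<And>s. subalgebra M (F s)"
    and F_mono: "\<And>r s. r \<le> s \<Longrightarrow> sets (F r) \<subseteq> sets (F s)"
    and bounded_increment: "\<And>s. 1 \<le> s \<Longrightarrow> bounded_rv (F (Suc s)) (\<xi> s)"
    and orthogonal_increment:
      "\<And>s Z. 1 \<le> s \<Longrightarrow> bounded_rv (F s) Z \<Longrightarrow> (\<integral>x. Z x * \<xi> s x \<partial>M) = 0"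
begin

definition S :: "nat \<Rightarrow> 'a \<Rightarrow> real" where
  "S t x = (\<Sum>s\<in>{1..t}. \<xi> s x)"

lemma space_F[simp]: "space (F s) = space M"
  using subalgebra_F unfolding subalgebra_def by blast

lemma sets_F_subset: "sets (F s) \<subseteq> sets M"
  using subalgebra_F unfolding subalgebra_def by blast

lemma bounded_rv_F_mono: "r \<le> s \<Longrightarrow> bounded_rv (F r) f \<Longrightarrow> bounded_rv (F s) f"
  unfolding bounded_rv_def using F_mono
  by (metis measurable_from_subalg space_F subalgebra_def)

lemma bounded_rv_F_imp_bounded_rv: "bounded_rv (F s) f \<Longrightarrow> bounded_rv M f"
  unfolding bounded_rv_def using subalgebra_F measurable_from_subalg by (metis space_F)

lemma bounded_rv_S_F: "t < s \<Longrightarrow> bounded_rv (F s) (S t)"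
  unfolding S_def by (intro bounded_rv_sum bounded_rv_F_mono[OF _ bounded_increment]) auto

lemma bounded_rv_S: "bounded_rv M (S t)"
  by (rule bounded_rv_F_imp_bounded_rv[OF bounded_rv_S_F[of t "Suc t"]]) simp

lemma bounded_rv_increment: "1 \<le> s \<Longrightarrow> bounded_rv M (\<xi> s)"
  using bounded_increment by (rule bounded_rv_F_imp_bounded_rv)

lemma S_0[simp]: "S 0 x = 0"
  by (simp add: S_def)

lemma S_Suc: "S (Suc t) x = S t x + \<xi> (Suc t) x"
  unfolding S_def by (simp add: add.commute)

lemma S_diff: "t \<le> T \<Longrightarrow> S T x - S t x = (\<Sum>s\<in>{Suc t..T}. \<xi> s x)"
proof -
  assume "t \<le> T"
  then have "{1..T} = {1..t} \<union> {Suc t..T}" by auto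
  then show ?thesis unfolding S_def by (simp add: sum.union_disjoint)
qed

lemma integral_mult_S_diff:
  assumes "t \<le> T" and Z: "bounded_rv (F (Suc t)) Z"
  shows "(\<integral>x. Z x * (S T x - S t x) \<partial>M) = 0"
proof -
  have Z_F: "bounded_rv (F s) Z" if "s \<in> {Suc t..T}" for s
    using that by (intro bounded_rv_F_mono[OF _ Z]) auto
  have "(\<integral>x. Z x * (S T x - S t x) \<partial>M) = (\<integral>x. (\<Sum>s\<in>{Suc t..T}. Z x * \<xi> s x) \<partial>M)"
    using assms(1) by (simp add: S_diff sum_distrib_left)
  also have "\<dots> = (\<Sum>s\<in>{Suc t..T}. \<integral>x. Z x * \<xi> s x \<partial>M)"
    using Z_F by (intro Bochner_Integration.integral_sum integrable_bounded_rv bounded_rv_mult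
        bounded_rv_F_imp_bounded_rv bounded_rv_increment) auto
  also have "\<dots> = 0"
    using Z_F by (intro sum.neutral ballI orthogonal_increment) auto
  finally show ?thesis .
qed

lemma integral_S_square: "(\<integral>x. (S T x)\<^sup>2 \<partial>M) = (\<Sum>s\<in>{1..T}. \<integral>x. (\<xi> s x)\<^sup>2 \<partial>M)"
proof (induction T)
  case (Suc T)
  have "(\<integral>x. (S (Suc T) x)\<^sup>2 \<partial>M)
      = (\<integral>x. (S T x)\<^sup>2 + 2 * (S T x * (S (Suc T) x - S T x)) + (\<xi> (Suc T) x)\<^sup>2 \<partial>M)"
    by (simp add: S_Suc power2_sum mult.assoc add_ac)
  also have "\<dots> = (\<integral>x. (S T x)\<^sup>2 \<partial>M) + 2 * (\<integral>x. S T x * (S (Suc T) x - S T x) \<partial>M)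
      + (\<integral>x. (\<xi> (Suc T) x)\<^sup>2 \<partial>M)"
    using bounded_rv_S bounded_rv_increment[of "Suc T"]
    by (simp add: integrable_bounded_rv bounded_rv_intros)
  also have "(\<integral>x. S T x * (S (Suc T) x - S T x) \<partial>M) = 0"
    by (intro integral_mult_S_diff bounded_rv_S_F) auto
  finally show ?case using Suc by simp
qed simp

definition first_exceedance :: "real \<Rightarrow> nat \<Rightarrow> 'a set" where
  "first_exceedance l t = {x \<in> space M. l < \<bar>S t x\<bar> \<and> (\<forall>r<t. \<bar>S r x\<bar> \<le> l)}"

lemma first_exceedance_sets_F: "first_exceedance l t \<in> sets (F (Suc t))"
proof -
  have S_F: "{x \<in> space (F (Suc t)). P (S r x)} \<in> sets (F (Suc t))"
    if "r \<le> t" "P \<in> borel \<rightarrow>\<^sub>M count_space UNIV" for r P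
  proof -
    have [measurable]: "S r \<in> borel_measurable (F (Suc t))"
      using bounded_rv_S_F[of r "Suc t"] that(1) by (simp add: bounded_rv_def)
    show ?thesis using that(2) by measurable
  qed
  have "{x \<in> space (F (Suc t)). l < \<bar>S t x\<bar>}
      \<inter> {x \<in> space (F (Suc t)). \<forall>r\<in>{..<t}. \<bar>S r x\<bar> \<le> l} \<in> sets (F (Suc t))"
    by (intro sets.Int sets.sets_Collect_finite_All S_F) auto
  moreover have "first_exceedance l t = {x \<in> space (F (Suc t)). l < \<bar>S t x\<bar>}
      \<inter> {x \<in> space (F (Suc t)). \<forall>r\<in>{..<t}. \<bar>S r x\<bar> \<le> l}"
    unfolding first_exceedance_def by auto
  ultimately show ?thesis by simp
qed

lemma first_exceedance_sets[measurable]: "first_exceedance l t \<in> sets M"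
  using first_exceedance_sets_F sets_F_subset by blast

lemma disjoint_first_exceedance: "disjoint_family (first_exceedance l)"
  unfolding disjoint_family_on_def
proof (intro ballI impI)
  fix t t' :: nat assume "t \<noteq> t'"
  then consider "t < t'" | "t' < t" by linarith
  then show "first_exceedance l t \<inter> first_exceedance l t' = {}"
    by cases (force simp: first_exceedance_def)+
qed

lemma UN_first_exceedance:
  assumes "0 \<le> l"
  shows "(\<Union>t\<in>{1..T}. first_exceedance l t) = {x \<in> space M. \<exists>t\<in>{1..T}. l < \<bar>S t x\<bar>}"
proof (intro antisym subsetI)
  fix x assume "x \<in> {x \<in> space M. \<exists>t\<in>{1..T}. l < \<bar>S t x\<bar>}"
  then obtain t1 where x: "x \<in> space M" and t1: "t1 \<in> {1..T}" "l < \<bar>S t1 x\<bar>" by blast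
  define t0 where "t0 = (LEAST t. l < \<bar>S t x\<bar>)"
  have t0: "l < \<bar>S t0 x\<bar>" unfolding t0_def using t1(2) by (rule LeastI)
  have "t0 \<le> t1" unfolding t0_def using t1(2) by (rule Least_le)
  have "\<bar>S r x\<bar> \<le> l" if "r < t0" for r
    using not_less_Least[OF that[unfolded t0_def]] by simp
  moreover have "1 \<le> t0" using t0 assms by (cases t0) auto
  ultimately show "x \<in> (\<Union>t\<in>{1..T}. first_exceedance l t)"
    using x t1(1) t0 \<open>t0 \<le> t1\<close> unfolding first_exceedance_def by auto
qed (auto simp: first_exceedance_def)

lemma measure_first_exceedance_le:
  assumes "0 \<le> l" "t \<le> T"
  shows "l\<^sup>2 * prob (first_exceedance l t)
    \<le> (\<integral>x. indicator (first_exceedance l t) x * (S T x)\<^sup>2 \<partial>M)"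
proof -
  define E where "E = first_exceedance l t"
  have Z: "bounded_rv (F (Suc t)) (\<lambda>x. indicator E x * S t x)"
    unfolding E_def
    by (intro bounded_rv_mult bounded_rv_indicator first_exceedance_sets_F bounded_rv_S_F) auto
  have E_M: "bounded_rv M (indicator E)" by (simp add: E_def bounded_rv_indicator)
  have "l\<^sup>2 * prob E = (\<integral>x. indicator E x * l\<^sup>2 \<partial>M)"
    by (simp add: E_def)
  also have "\<dots> \<le> (\<integral>x. indicator E x * (S t x)\<^sup>2 \<partial>M)"
  proof (rule integral_mono)
    show "indicator E x * l\<^sup>2 \<le> indicator E x * (S t x)\<^sup>2" for x
      using assms(1) power_mono[of l "\<bar>S t x\<bar>" 2]
      by (auto simp: E_def first_exceedance_def indicator_def)
  qed (use E_M bounded_rv_S in \<open>auto intro!: integrable_bounded_rv bounded_rv_intros\<close>)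
  also have "\<dots> \<le> (\<integral>x. indicator E x * (S t x)\<^sup>2 \<partial>M)
      + 2 * (\<integral>x. indicator E x * S t x * (S T x - S t x) \<partial>M)
      + (\<integral>x. indicator E x * (S T x - S t x)\<^sup>2 \<partial>M)"
    using integral_mult_S_diff[OF assms(2) Z] by (simp add: mult.assoc)
  also have "\<dots> = (\<integral>x. indicator E x * (S t x)\<^sup>2 + 2 * (indicator E x * S t x * (S T x - S t x))
      + indicator E x * (S T x - S t x)\<^sup>2 \<partial>M)"
    using E_M bounded_rv_S[of t] bounded_rv_S[of T] by (simp add: integrable_bounded_rv bounded_rv_intros)
  also have "\<dots> = (\<integral>x. indicator E x * (S T x)\<^sup>2 \<partial>M)"
    by (intro Bochner_Integration.integral_cong refl) (simp add: power2_eq_square algebra_simps)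
  finally show ?thesis by (simp add: E_def)
qed

theorem kolmogorov_maximal_inequality:
  assumes "0 < l"
  shows "prob {x \<in> space M. \<exists>t\<in>{1..T}. l < \<bar>S t x\<bar>} \<le> (\<integral>x. (S T x)\<^sup>2 \<partial>M) / l\<^sup>2"
proof -
  let ?E = "first_exceedance l"
  have "prob {x \<in> space M. \<exists>t\<in>{1..T}. l < \<bar>S t x\<bar>} = prob (\<Union>t\<in>{1..T}. ?E t)"
    using UN_first_exceedance[of l T] assms by (simp only: less_imp_le)
  also have "\<dots> = (\<Sum>t\<in>{1..T}. prob (?E t))"
    by (rule measure_finite_Union)
       (auto intro: disjoint_family_on_mono[OF subset_UNIV disjoint_first_exceedance])
  finally have "l\<^sup>2 * prob {x \<in> space M. \<exists>t\<in>{1..T}. l < \<bar>S t x\<bar>}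
      = (\<Sum>t\<in>{1..T}. l\<^sup>2 * prob (?E t))"
    by (simp add: sum_distrib_left)
  also have "\<dots> \<le> (\<Sum>t\<in>{1..T}. \<integral>x. indicator (?E t) x * (S T x)\<^sup>2 \<partial>M)"
    using assms by (intro sum_mono measure_first_exceedance_le) auto
  also have "\<dots> = (\<integral>x. (\<Sum>t\<in>{1..T}. indicator (?E t) x * (S T x)\<^sup>2) \<partial>M)"
    using bounded_rv_S
    by (intro Bochner_Integration.integral_sum[symmetric] integrable_bounded_rv bounded_rv_intros) auto
  also have "\<dots> = (\<integral>x. indicator (\<Union>t\<in>{1..T}. ?E t) x * (S T x)\<^sup>2 \<partial>M)"
    by (simp only: sum_distrib_right[symmetric] indicator_UN_disjoint[OF finite_atLeastAtMost
          disjoint_family_on_mono[OF subset_UNIV disjoint_first_exceedance]])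
  also have "\<dots> \<le> (\<integral>x. (S T x)\<^sup>2 \<partial>M)"
  proof (rule integral_mono)
    have "(\<Union>t\<in>{1..T}. ?E t) \<in> sets M" by auto
    then show "integrable M (\<lambda>x. indicator (\<Union>t\<in>{1..T}. ?E t) x * (S T x)\<^sup>2)"
      by (intro integrable_bounded_rv bounded_rv_intros bounded_rv_S)
  qed (auto intro!: integrable_bounded_rv bounded_rv_intros bounded_rv_S simp: indicator_def)
  finally show ?thesis using assms by (simp add: field_simps)
qed

end

lemma pulls_Suc: "pulls A k (Suc t) x = pulls A k t x + (if A (Suc t) x = k then 1 else 0)"
proof -
  have "{s \<in> {1..Suc t}. A s x = k} = {s \<in> {1..t}. A s x = k} \<union> (if A (Suc t) x = k then {Suc t} else {})"
    by (auto simp: le_Suc_eq)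
  then show ?thesis unfolding pulls_def by (auto simp: card_insert_if)
qed

lemma pulls_0[simp]: "pulls A k 0 x = 0"
  by (simp add: pulls_def)

lemma pulls_le: "pulls A k t x \<le> t"
  by (induction t) (auto simp: pulls_Suc)

lemma pulls_mono: "t \<le> t' \<Longrightarrow> pulls A k t x \<le> pulls A k t' x"
  unfolding pulls_def by (rule card_mono) auto

lemma pulls_eq_sum: "pulls A k t x = (\<Sum>s\<in>{1..t}. if A s x = k then 1 else 0)"
  unfolding pulls_def card_eq_sum by (rule sum.inter_filter) simp

lemma sum_over_pulls:
  "(\<Sum>s\<in>{1..t}. if A s x = k then f (pulls A k (s - 1) x) else 0) = (\<Sum>j<pulls A k t x. f j)"
proof (induction t)
  case (Suc t)
  have "{1..Suc t} = insert (Suc t) {1..t}" by auto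
  then show ?case using Suc by (simp add: pulls_Suc add.commute)
qed simp

locale bandit =
  fixes M :: "'a measure" and kstar :: nat and P :: "nat \<Rightarrow> real measure"
    and W :: "'a \<Rightarrow> 'w" and MW :: "'w measure"
    and A :: "nat \<Rightarrow> 'a \<Rightarrow> nat" and Y :: "nat \<Rightarrow> 'a \<Rightarrow> real"
  assumes model: "bandit_model M kstar P W MW A Y"
begin

sublocale prob_space M
  using model unfolding bandit_model_def by blast

lemma prob_space_arm: "k \<in> {1..kstar} \<Longrightarrow> prob_space (P k)"
  and sets_arm: "k \<in> {1..kstar} \<Longrightarrow> sets (P k) = sets borel"
  and integrable_arm: "k \<in> {1..kstar} \<Longrightarrow> integrable (P k) (\<lambda>y. y)"
  and W_measurable: "W \<in> M \<rightarrow>\<^sub>M MW"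
  and A_measurable: "1 \<le> t \<Longrightarrow> A t \<in> M \<rightarrow>\<^sub>M count_space UNIV"
  and Y_measurable: "1 \<le> t \<Longrightarrow> Y t \<in> borel_measurable M"
  and conditional_law: "1 \<le> t \<Longrightarrow> B \<in> sets borel \<Longrightarrow>
    AE x in M. real_cond_exp M (hist_sigma M W MW A Y t (t - 1)) (indicator (Y t -` B \<inter> space M)) x
      = measure (P (A t x)) B"
  using model unfolding bandit_model_def by blast+

lemma measurable_arm_iff_borel:
  "k \<in> {1..kstar} \<Longrightarrow> f \<in> borel_measurable (P k) \<longleftrightarrow> f \<in> borel_measurable borel"
  using sets_arm by (simp cong: measurable_cong_sets)

definition history_generators :: "nat \<Rightarrow> 'a set set" where
  "history_generators t =
     {W -` B \<inter> space M | B. B \<in> sets MW}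
     \<union> {A s -` B \<inter> space M | s B. 1 \<le> s \<and> s \<le> t}
     \<union> {Y s -` B \<inter> space M | s B. 1 \<le> s \<and> s \<le> t - 1 \<and> B \<in> sets borel}"

text \<open>\<open>history t\<close> is generated by \<open>W, A\<^sub>1, Y\<^sub>1, \<dots>, Y\<^sub>t\<^sub>-\<^sub>1, A\<^sub>t\<close>: everything observed
  before the reward \<open>Y\<^sub>t\<close> is drawn.\<close>
definition history :: "nat \<Rightarrow> 'a measure" where
  "history t = hist_sigma M W MW A Y t (t - 1)"

lemma history_generators_sets: "history_generators t \<subseteq> sets M"
proof -
  have "W -` B \<inter> space M \<in> sets M" if "B \<in> sets MW" for B
    using W_measurable that by (rule measurable_sets)
  moreover have "A s -` B \<inter> space M \<in> sets M" if "1 \<le> s" for s B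
    using A_measurable[OF that] by (rule measurable_sets) simp
  moreover have "Y s -` B \<inter> space M \<in> sets M" if "1 \<le> s" "B \<in> sets borel" for s B
    using Y_measurable[OF that(1)] that(2) by (rule measurable_sets)
  ultimately show ?thesis unfolding history_generators_def by blast
qed

lemma history_generators_Pow: "history_generators t \<subseteq> Pow (space M)"
  using history_generators_sets sets.sets_into_space by blast

lemma history_eq_sigma: "history t = sigma (space M) (history_generators t)"
  unfolding history_def hist_sigma_def history_generators_def by simp

lemma space_history[simp]: "space (history t) = space M"
  unfolding history_eq_sigma using history_generators_Pow by (simp add: space_measure_of_conv)

lemma sets_history: "sets (history t) = sigma_sets (space M) (history_generators t)"
  unfolding history_eq_sigma using history_generators_Pow by (simp add: sets_measure_of_conv)

lemma subalgebra_history: "subalgebra M (history t)"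
  unfolding subalgebra_def sets_history using history_generators_sets
  by (simp add: sets.sigma_sets_subset)

lemma history_mono: "r \<le> s \<Longrightarrow> sets (history r) \<subseteq> sets (history s)"
proof -
  assume "r \<le> s"
  then have "history_generators r \<subseteq> history_generators s"
    unfolding history_generators_def by (intro Un_mono subsetI) (auto 0 4)
  then show ?thesis unfolding sets_history by (rule sigma_sets_subseteq)
qed

lemma A_measurable_history:
  assumes "1 \<le> s" "s \<le> t"
  shows "A s \<in> history t \<rightarrow>\<^sub>M count_space UNIV"
proof (rule measurableI)
  fix B :: "nat set"
  have "A s -` B \<inter> space M \<in> history_generators t"
    using assms unfolding history_generators_def by blast
  then show "A s -` B \<inter> space (history t) \<in> sets (history t)"
    unfolding sets_history by auto
qed simp

lemma Y_measurable_history: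
  assumes "1 \<le> s" "s < t"
  shows "Y s \<in> borel_measurable (history t)"
proof (rule measurableI)
  fix B :: "real set" assume "B \<in> sets borel"
  then have "Y s -` B \<inter> space M \<in> history_generators t"
    using assms unfolding history_generators_def by (intro UnI2 CollectI exI[of _ s] exI[of _ B]) auto
  then show "Y s -` B \<inter> space (history t) \<in> sets (history t)"
    unfolding sets_history by auto
qed simp

lemma bounded_rv_history_imp_bounded_rv: "bounded_rv (history t) f \<Longrightarrow> bounded_rv M f"
  unfolding bounded_rv_def using measurable_from_subalg[OF subalgebra_history] by auto

lemma sigma_finite_subalgebra_history: "sigma_finite_subalgebra M (history t)"
proof -
  have "finite_measure_subalgebra M (history t)"
    unfolding finite_measure_subalgebra_def finite_measure_subalgebra_axioms_def
    using subalgebra_history finite_measure_axioms by blast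
  then interpret finite_measure_subalgebra M "history t" .
  show ?thesis by (rule sigma_finite_subalgebra_axioms)
qed

lemma integral_history_mult_indicator_reward:
  assumes t: "1 \<le> t" and B: "B \<in> sets borel" and Z: "bounded_rv (history t) Z"
  shows "(\<integral>x. Z x * indicator (Y t -` B \<inter> space M) x \<partial>M) = (\<integral>x. Z x * measure (P (A t x)) B \<partial>M)"
proof -
  interpret sigma_finite_subalgebra M "history t" by (rule sigma_finite_subalgebra_history)
  have Z_M: "bounded_rv M Z" using Z by (rule bounded_rv_history_imp_bounded_rv)
  have YB: "Y t -` B \<inter> space M \<in> sets M" using Y_measurable[OF t] B by (rule measurable_sets)
  have [measurable]: "(\<lambda>x. measure (P (A t x)) B) \<in> borel_measurable M"
    using measurable_compose[OF A_measurable[OF t], of "\<lambda>k. measure (P k) B" borel] by simp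
  have "(\<integral>x. Z x * indicator (Y t -` B \<inter> space M) x \<partial>M)
      = (\<integral>x. Z x * real_cond_exp M (history t) (indicator (Y t -` B \<inter> space M)) x \<partial>M)"
    using Z Z_M YB by (intro real_cond_exp_intg(2)[symmetric] integrable_bounded_rv bounded_rv_intros)
      (auto simp: bounded_rv_def)
  also have "\<dots> = (\<integral>x. Z x * measure (P (A t x)) B \<partial>M)"
    using Z_M conditional_law[OF t B]
    by (intro integral_cong_AE) (auto simp: bounded_rv_def history_def elim: AE_mp)
  finally show ?thesis .
qed

text \<open>Given the history, \<open>Y\<^sub>t\<close> has law \<open>P\<^bsub>A\<^sub>t\<^esub>\<close>, and \<open>Z\<close> vanishes off \<open>{A\<^sub>t = k}\<close>.\<close>
lemma distr_density_history_reward: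
  assumes t: "1 \<le> t" and k: "k \<in> {1..kstar}"
    and Z: "bounded_rv (history t) Z" "\<And>x. x \<in> space M \<Longrightarrow> 0 \<le> Z x"
    and Z_arm: "\<And>x. x \<in> space M \<Longrightarrow> A t x \<noteq> k \<Longrightarrow> Z x = 0"
  shows "distr (density M Z) borel (Y t) = density (P k) (\<lambda>_. \<integral>x. Z x \<partial>M)"
proof (rule measure_eqI)
  interpret Pk: prob_space "P k" using prob_space_arm[OF k] .
  have Z_M: "bounded_rv M Z" using Z(1) by (rule bounded_rv_history_imp_bounded_rv)
  have [measurable]: "Z \<in> borel_measurable M" "Y t \<in> borel_measurable M"
    using Z_M Y_measurable[OF t] by (simp_all add: bounded_rv_def)
  fix B assume "B \<in> sets (distr (density M Z) borel (Y t))"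
  then have B: "B \<in> sets borel" by simp
  have YB: "Y t -` B \<inter> space M \<in> sets M" using B by measurable
  have "emeasure (distr (density M Z) borel (Y t)) B
      = (\<integral>\<^sup>+x. ennreal (Z x) * indicator (Y t -` B \<inter> space M) x \<partial>M)"
    using B YB by (simp add: emeasure_distr emeasure_density)
  also have "\<dots> = (\<integral>\<^sup>+x. ennreal (Z x * indicator (Y t -` B \<inter> space M) x) \<partial>M)"
    by (intro nn_integral_cong) (auto simp: indicator_def)
  also have "\<dots> = ennreal (\<integral>x. Z x * indicator (Y t -` B \<inter> space M) x \<partial>M)"
    using Z_M YB Z(2)
    by (intro nn_integral_eq_integral integrable_bounded_rv bounded_rv_intros) (auto simp: indicator_def)
  also have "(\<integral>x. Z x * indicator (Y t -` B \<inter> space M) x \<partial>M) = (\<integral>x. Z x * measure (P k) B \<partial>M)"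
    unfolding integral_history_mult_indicator_reward[OF t B Z(1)]
    using Z_arm by (intro Bochner_Integration.integral_cong) auto
  also have "ennreal \<dots> = emeasure (density (P k) (\<lambda>_. \<integral>x. Z x \<partial>M)) B"
    using B sets_arm[OF k] Z(2)
    by (subst emeasure_density_const)
       (auto simp: Pk.emeasure_eq_measure ennreal_mult intro!: integral_nonneg_AE)
  finally show "emeasure (distr (density M Z) borel (Y t)) B
      = emeasure (density (P k) (\<lambda>_. \<integral>x. Z x \<partial>M)) B" .
qed (simp add: sets_arm[OF k])

lemma integral_history_mult_reward_nonneg:
  assumes t: "1 \<le> t" and k: "k \<in> {1..kstar}"
    and Z: "bounded_rv (history t) Z" "\<And>x. x \<in> space M \<Longrightarrow> 0 \<le> Z x"
    and Z_arm: "\<And>x. x \<in> space M \<Longrightarrow> A t x \<noteq> k \<Longrightarrow> Z x = 0"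
    and g: "g \<in> borel_measurable borel"
  shows "(\<integral>x. Z x * g (Y t x) \<partial>M) = (\<integral>x. Z x \<partial>M) * (\<integral>y. g y \<partial>P k)"
proof -
  have [measurable]: "Z \<in> borel_measurable M" "Y t \<in> borel_measurable M"
    using bounded_rv_history_imp_bounded_rv[OF Z(1)] Y_measurable[OF t] by (simp_all add: bounded_rv_def)
  have "(\<integral>x. Z x * g (Y t x) \<partial>M) = integral\<^sup>L (distr (density M Z) borel (Y t)) g"
    using Z(2) g by (simp add: integral_density integral_distr)
  also have "\<dots> = (\<integral>x. Z x \<partial>M) * (\<integral>y. g y \<partial>P k)"
    using Z(2) g k
    by (subst distr_density_history_reward[OF t k Z Z_arm])
       (simp_all add: integral_density measurable_arm_iff_borel integral_nonneg_AE)
  finally show ?thesis .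
qed

lemma integral_history_mult_reward:
  assumes t: "1 \<le> t" and k: "k \<in> {1..kstar}" and Z: "bounded_rv (history t) Z"
    and Z_arm: "\<And>x. x \<in> space M \<Longrightarrow> A t x \<noteq> k \<Longrightarrow> Z x = 0"
    and g: "bounded_rv borel g"
  shows "(\<integral>x. Z x * g (Y t x) \<partial>M) = (\<integral>x. Z x \<partial>M) * (\<integral>y. g y \<partial>P k)"
proof -
  define Zp Zn where "Zp x = max (Z x) 0" and "Zn x = max (- Z x) 0" for x
  have parts: "bounded_rv (history t) Zp" "bounded_rv (history t) Zn"
    unfolding Zp_def Zn_def using Z by (auto intro!: bounded_rv_intros)
  then have parts_M: "bounded_rv M Zp" "bounded_rv M Zn"
    by (auto intro: bounded_rv_history_imp_bounded_rv)
  have gY: "bounded_rv M (\<lambda>x. g (Y t x))"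
    using g Y_measurable[OF t] by (rule bounded_rv_compose)
  have g_meas: "g \<in> borel_measurable borel" using g by (simp add: bounded_rv_def)
  have "(\<integral>x. Z x * g (Y t x) \<partial>M) = (\<integral>x. Zp x * g (Y t x) - Zn x * g (Y t x) \<partial>M)"
    by (intro Bochner_Integration.integral_cong) (auto simp: Zp_def Zn_def max_def algebra_simps)
  also have "\<dots> = (\<integral>x. Zp x * g (Y t x) \<partial>M) - (\<integral>x. Zn x * g (Y t x) \<partial>M)"
    using parts_M gY by (simp add: integrable_bounded_rv bounded_rv_intros)
  also have "\<dots> = ((\<integral>x. Zp x \<partial>M) - (\<integral>x. Zn x \<partial>M)) * (\<integral>y. g y \<partial>P k)"
  proof -
    have "(\<integral>x. Zp x * g (Y t x) \<partial>M) = (\<integral>x. Zp x \<partial>M) * (\<integral>y. g y \<partial>P k)"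
      "(\<integral>x. Zn x * g (Y t x) \<partial>M) = (\<integral>x. Zn x \<partial>M) * (\<integral>y. g y \<partial>P k)"
      by (intro integral_history_mult_reward_nonneg[OF t k] parts g_meas; simp add: Zp_def Zn_def Z_arm)+
    then show ?thesis by (simp add: left_diff_distrib)
  qed
  also have "(\<integral>x. Zp x \<partial>M) - (\<integral>x. Zn x \<partial>M) = (\<integral>x. Z x \<partial>M)"
    using parts_M
    by (subst Bochner_Integration.integral_diff[symmetric])
       (auto simp: integrable_bounded_rv Zp_def Zn_def max_def intro!: Bochner_Integration.integral_cong)
  finally show ?thesis .
qed

lemma pulls_measurable[measurable]: "(\<lambda>x. real (pulls A i n x)) \<in> borel_measurable M"
proof -
  have "(\<lambda>x. \<Sum>r\<in>{1..n}. (\<lambda>a. if a = i then 1 else 0 :: real) (A r x)) \<in> borel_measurable M"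
    by (intro borel_measurable_sum measurable_compose[OF A_measurable]) auto
  moreover have "real (pulls A i n x) = (\<Sum>r\<in>{1..n}. (\<lambda>a. if a = i then 1 else 0 :: real) (A r x))" for x
    unfolding pulls_eq_sum of_nat_sum by (intro sum.cong) auto
  ultimately show ?thesis by simp
qed

lemma muhat_measurable[measurable]: "muhat A Y i n \<in> borel_measurable M"
proof -
  have "(\<lambda>x. \<Sum>r\<in>{1..n}. (\<lambda>a. if a = i then 1 else 0 :: real) (A r x) * Y r x) \<in> borel_measurable M"
    by (intro borel_measurable_sum borel_measurable_times measurable_compose[OF A_measurable]
        Y_measurable) auto
  moreover have "rsum A Y i n = (\<lambda>x. \<Sum>r\<in>{1..n}. (\<lambda>a. if a = i then 1 else 0 :: real) (A r x) * Y r x)"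
    unfolding rsum_def by (auto intro!: sum.cong)
  ultimately have "rsum A Y i n \<in> borel_measurable M" by (simp only:)
  then show ?thesis unfolding muhat_def by measurable
qed

end

locale bandit_arm = bandit +
  fixes k :: nat
  assumes arm: "k \<in> {1..kstar}"
begin

sublocale Pk: prob_space "P k"
  using prob_space_arm[OF arm] .

abbreviation N :: "nat \<Rightarrow> 'a \<Rightarrow> nat" where
  "N t x \<equiv> pulls A k t x"

definition trunc_mean :: "nat \<Rightarrow> real" where
  "trunc_mean n = (\<integral>y. truncate n y \<partial>P k)"

definition centred :: "nat \<Rightarrow> real \<Rightarrow> real" where
  "centred n y = truncate n y - trunc_mean n"

text \<open>\<open>nth_pull s n\<close> indicates that round \<open>s\<close> is the \<open>(n+1)\<close>-st pull of arm \<open>k\<close>.\<close>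
definition nth_pull :: "nat \<Rightarrow> nat \<Rightarrow> 'a \<Rightarrow> real" where
  "nth_pull s n x = (if A s x = k \<and> N (s - 1) x = n then 1 else 0)"

text \<open>The \<open>n\<close>-th reward of arm \<open>k\<close> is truncated at level \<open>n\<close> and centred; only the first \<open>U\<close>
  rewards are kept, which makes the increments bounded.\<close>
definition capped_increment :: "nat \<Rightarrow> nat \<Rightarrow> 'a \<Rightarrow> real" where
  "capped_increment U s x = (\<Sum>n<U. nth_pull s n x * centred (Suc n) (Y s x))"

definition capped_sum :: "nat \<Rightarrow> nat \<Rightarrow> 'a \<Rightarrow> real" where
  "capped_sum U t x = (\<Sum>s\<in>{1..t}. capped_increment U s x)"

definition centred_sum :: "nat \<Rightarrow> 'a \<Rightarrow> real" where
  "centred_sum t x = (\<Sum>s\<in>{1..t}. if A s x = k then centred (N s x) (Y s x) else 0)"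

lemma sum_nth_pull:
  "(\<Sum>n<U. nth_pull s n x * \<phi> n) = (if A s x = k \<and> N (s - 1) x < U then \<phi> (N (s - 1) x) else 0)"
proof -
  have "(\<Sum>n<U. nth_pull s n x * \<phi> n) = (\<Sum>n<U. if A s x = k \<and> n = N (s - 1) x then \<phi> n else 0)"
    by (intro sum.cong) (auto simp: nth_pull_def)
  also have "\<dots> = (if A s x = k \<and> N (s - 1) x < U then \<phi> (N (s - 1) x) else 0)"
    by (cases "A s x = k") (auto simp: sum.delta)
  finally show ?thesis .
qed

lemma capped_increment_eq:
  "capped_increment U s x
     = (if A s x = k \<and> N (s - 1) x < U then centred (Suc (N (s - 1) x)) (Y s x) else 0)"
  unfolding capped_increment_def by (rule sum_nth_pull)

lemma integrable_truncate: "integrable (P k) (truncate n)"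
  using abs_truncate_le sets_arm[OF arm]
  by (intro Pk.integrable_const_bound[where B="real n"]) (auto cong: measurable_cong_sets)

lemma abs_trunc_mean_le: "\<bar>trunc_mean n\<bar> \<le> real n"
proof -
  have "\<bar>trunc_mean n\<bar> \<le> (\<integral>y. \<bar>truncate n y\<bar> \<partial>P k)"
    unfolding trunc_mean_def by (rule integral_abs_bound)
  also have "\<dots> \<le> (\<integral>y. real n \<partial>P k)"
    using integrable_truncate abs_truncate_le by (intro integral_mono) auto
  finally show ?thesis by (simp add: Pk.prob_space)
qed

lemma abs_centred_le: "\<bar>centred n y\<bar> \<le> 2 * real n"
  using abs_truncate_le[of n y] abs_trunc_mean_le[of n] unfolding centred_def by linarith

lemma centred_measurable[measurable]: "centred n \<in> borel_measurable borel"
  unfolding centred_def by measurable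

lemma bounded_rv_centred: "bounded_rv borel (centred n)"
  unfolding centred_def by (intro bounded_rvI[OF _ abs_centred_le[unfolded centred_def]]) simp

lemma integral_centred: "(\<integral>y. centred n y \<partial>P k) = 0"
  unfolding centred_def using integrable_truncate by (simp add: trunc_mean_def Pk.prob_space)

lemma abs_capped_increment_le: "\<bar>capped_increment U s x\<bar> \<le> 2 * real U"
proof -
  have "\<bar>centred (Suc (N (s - 1) x)) (Y s x)\<bar> \<le> 2 * real U" if "N (s - 1) x < U"
    using abs_centred_le[of "Suc (N (s - 1) x)" "Y s x"] that by simp
  then show ?thesis unfolding capped_increment_eq by auto
qed

lemma pulls_measurable_history:
  assumes "t < s"
  shows "(\<lambda>x. real (N t x)) \<in> borel_measurable (history s)"
proof -
  have "(\<lambda>x. \<Sum>r\<in>{1..t}. (\<lambda>a. if a = k then 1 else 0 :: real) (A r x)) \<in> borel_measurable (history s)"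
    using assms by (intro borel_measurable_sum measurable_compose[OF A_measurable_history]) auto
  moreover have "real (N t x) = (\<Sum>r\<in>{1..t}. (\<lambda>a. if a = k then 1 else 0 :: real) (A r x))" for x
    unfolding pulls_eq_sum of_nat_sum by (intro sum.cong) auto
  ultimately show ?thesis by simp
qed

lemma nth_pull_measurable_history:
  assumes "1 \<le> s" "s \<le> s'"
  shows "nth_pull s n \<in> borel_measurable (history s')"
proof -
  have [measurable]: "(\<lambda>x. real (N (s - 1) x)) \<in> borel_measurable (history s')"
    "A s \<in> history s' \<rightarrow>\<^sub>M count_space UNIV"
    using assms by (auto intro: pulls_measurable_history A_measurable_history)
  have "nth_pull s n = (\<lambda>x. if A s x = k \<and> real (N (s - 1) x) = real n then 1 else 0)"
    by (simp add: nth_pull_def fun_eq_iff)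
  also have "\<dots> \<in> borel_measurable (history s')" by measurable
  finally show ?thesis .
qed

lemma bounded_rv_nth_pull: "1 \<le> s \<Longrightarrow> s \<le> s' \<Longrightarrow> bounded_rv (history s') (nth_pull s n)"
  by (intro bounded_rvI[where c=1] nth_pull_measurable_history) (auto simp: nth_pull_def)

lemma bounded_rv_capped_increment:
  assumes "1 \<le> s" "s < s'"
  shows "bounded_rv (history s') (capped_increment U s)"
proof -
  have [measurable]: "nth_pull s n \<in> borel_measurable (history s')"
    "Y s \<in> borel_measurable (history s')" for n
    using assms by (auto intro: nth_pull_measurable_history Y_measurable_history)
  show ?thesis
  proof (rule bounded_rvI[where c="2 * real U"])
    show "capped_increment U s \<in> borel_measurable (history s')"
      unfolding capped_increment_def by measurable
  qed (rule abs_capped_increment_le)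
qed

lemma integral_mult_capped_increment:
  assumes s: "1 \<le> s" and Z: "bounded_rv (history s) Z"
  shows "(\<integral>x. Z x * capped_increment U s x \<partial>M) = 0"
proof -
  have Z_pull: "bounded_rv (history s) (\<lambda>x. Z x * nth_pull s n x)" for n
    using Z s by (intro bounded_rv_mult bounded_rv_nth_pull) auto
  have centred_Y: "bounded_rv M (\<lambda>x. centred n (Y s x))" for n
    using bounded_rv_centred Y_measurable[OF s] by (rule bounded_rv_compose)
  have "(\<integral>x. Z x * capped_increment U s x \<partial>M)
      = (\<integral>x. (\<Sum>n<U. Z x * nth_pull s n x * centred (Suc n) (Y s x)) \<partial>M)"
    unfolding capped_increment_def by (simp add: sum_distrib_left mult.assoc)
  also have "\<dots> = (\<Sum>n<U. \<integral>x. Z x * nth_pull s n x * centred (Suc n) (Y s x) \<partial>M)"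
    by (intro Bochner_Integration.integral_sum integrable_bounded_rv)
       (rule bounded_rv_mult[OF bounded_rv_history_imp_bounded_rv[OF Z_pull] centred_Y])
  also have "\<dots> = (\<Sum>n<U. (\<integral>x. Z x * nth_pull s n x \<partial>M) * (\<integral>y. centred (Suc n) y \<partial>P k))"
    by (intro sum.cong refl integral_history_mult_reward[OF s arm Z_pull _ bounded_rv_centred])
       (auto simp: nth_pull_def)
  also have "\<dots> = 0" by (simp add: integral_centred)
  finally show ?thesis .
qed

lemma orthogonal_increments_capped: "orthogonal_increments M history (capped_increment U)"
  unfolding orthogonal_increments_def orthogonal_increments_axioms_def
  using prob_space_axioms subalgebra_history history_mono bounded_rv_capped_increment
    integral_mult_capped_increment by auto

lemma S_capped_increment: "orthogonal_increments.S (capped_increment U) = capped_sum U"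
  using orthogonal_increments.S_def[OF orthogonal_increments_capped]
  by (simp add: fun_eq_iff capped_sum_def)

lemma integral_capped_increment_square:
  assumes s: "1 \<le> s"
  shows "(\<integral>x. (capped_increment U s x)\<^sup>2 \<partial>M)
    = (\<Sum>n<U. (\<integral>x. nth_pull s n x \<partial>M) * (\<integral>y. (centred (Suc n) y)\<^sup>2 \<partial>P k))"
proof -
  have square: "bounded_rv borel (\<lambda>y. (centred n y)\<^sup>2)" for n
    by (intro bounded_rv_power bounded_rv_centred)
  have "(\<integral>x. (capped_increment U s x)\<^sup>2 \<partial>M)
      = (\<integral>x. (\<Sum>n<U. nth_pull s n x * (centred (Suc n) (Y s x))\<^sup>2) \<partial>M)"
    by (intro Bochner_Integration.integral_cong) (simp_all add: capped_increment_eq sum_nth_pull)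
  also have "\<dots> = (\<Sum>n<U. \<integral>x. nth_pull s n x * (centred (Suc n) (Y s x))\<^sup>2 \<partial>M)"
    by (intro Bochner_Integration.integral_sum integrable_bounded_rv)
       (rule bounded_rv_mult[OF bounded_rv_history_imp_bounded_rv[OF bounded_rv_nth_pull[OF s order_refl]]
          bounded_rv_compose[OF square Y_measurable[OF s]]])
  also have "\<dots> = (\<Sum>n<U. (\<integral>x. nth_pull s n x \<partial>M) * (\<integral>y. (centred (Suc n) y)\<^sup>2 \<partial>P k))"
    using s
    by (intro sum.cong refl integral_history_mult_reward[where g="\<lambda>y. (centred (Suc n) y)\<^sup>2" for n]
        bounded_rv_nth_pull square arm) (auto simp: nth_pull_def)
  finally show ?thesis .
qed

lemma sum_nth_pull_le_1: "(\<Sum>s\<in>{1..T}. nth_pull s n x) \<le> 1"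
proof -
  have "(\<Sum>s\<in>{1..T}. nth_pull s n x)
      = (\<Sum>s\<in>{1..T}. if A s x = k then (\<lambda>j. if j = n then 1 else 0 :: real) (N (s - 1) x) else 0)"
    by (intro sum.cong) (auto simp: nth_pull_def)
  also have "\<dots> = (\<Sum>j<N T x. if j = n then 1 else 0 :: real)" by (rule sum_over_pulls)
  also have "\<dots> \<le> 1" by (simp add: sum.delta)
  finally show ?thesis .
qed

lemma integral_capped_sum_square_le:
  "(\<integral>x. (capped_sum U T x)\<^sup>2 \<partial>M) \<le> (\<Sum>n<U. \<integral>y. (centred (Suc n) y)\<^sup>2 \<partial>P k)"
proof -
  interpret I: orthogonal_increments M history "capped_increment U"
    by (rule orthogonal_increments_capped)
  have pull: "integrable M (nth_pull s n)" if "1 \<le> s" for s n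
    using bounded_rv_nth_pull[OF that order_refl]
    by (intro integrable_bounded_rv bounded_rv_history_imp_bounded_rv)
  have "(\<integral>x. (capped_sum U T x)\<^sup>2 \<partial>M)
      = (\<Sum>n<U. (\<Sum>s\<in>{1..T}. \<integral>x. nth_pull s n x \<partial>M) * (\<integral>y. (centred (Suc n) y)\<^sup>2 \<partial>P k))"
    unfolding S_capped_increment[symmetric] I.integral_S_square sum_distrib_right
    by (subst sum.swap) (intro sum.cong refl integral_capped_increment_square; simp)
  also have "\<dots> \<le> (\<Sum>n<U. 1 * (\<integral>y. (centred (Suc n) y)\<^sup>2 \<partial>P k))"
  proof (intro sum_mono mult_right_mono)
    fix n
    have "(\<Sum>s\<in>{1..T}. \<integral>x. nth_pull s n x \<partial>M) = (\<integral>x. (\<Sum>s\<in>{1..T}. nth_pull s n x) \<partial>M)"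
      using pull by (subst Bochner_Integration.integral_sum) auto
    also have "\<dots> \<le> (\<integral>x. 1 \<partial>M)"
      using pull sum_nth_pull_le_1 by (intro integral_mono) auto
    finally show "(\<Sum>s\<in>{1..T}. \<integral>x. nth_pull s n x \<partial>M) \<le> 1" by (simp add: prob_space)
  qed simp
  finally show ?thesis by simp
qed

lemma pulls_pred: "1 \<le> s \<Longrightarrow> N s x = N (s - 1) x + (if A s x = k then 1 else 0)"
  using pulls_Suc[of A k "s - 1" x] by simp

lemma capped_sum_eq_centred_sum:
  assumes "N t x \<le> U"
  shows "capped_sum U t x = centred_sum t x"
  unfolding capped_sum_def centred_sum_def
proof (rule sum.cong[OF refl])
  fix s assume s: "s \<in> {1..t}"
  have "N s x \<le> N t x" using s by (intro pulls_mono) auto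
  then show "capped_increment U s x = (if A s x = k then centred (N s x) (Y s x) else 0)"
    unfolding capped_increment_eq using pulls_pred[of s x] s assms by auto
qed

lemma capped_sum_measurable[measurable]: "capped_sum U t \<in> borel_measurable M"
proof -
  interpret I: orthogonal_increments M history "capped_increment U"
    by (rule orthogonal_increments_capped)
  show ?thesis using I.bounded_rv_S[of t] by (simp add: bounded_rv_def S_capped_increment)
qed

lemma centred_sum_measurable[measurable]: "centred_sum t \<in> borel_measurable M"
proof -
  have "centred_sum t = capped_sum t t"
    using capped_sum_eq_centred_sum[OF pulls_le] by (simp add: fun_eq_iff)
  then show ?thesis by simp
qed

text \<open>Kolmogorov's inequality for the capped sums, as the horizon tends to infinity; the capped and
  the plain sums agree as long as arm \<open>k\<close> has been pulled at most \<open>U\<close> times.\<close>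
lemma prob_large_centred_sum_le:
  assumes l: "0 < l"
  shows "prob {x \<in> space M. \<exists>t. N t x \<le> U \<and> l < \<bar>centred_sum t x\<bar>}
    \<le> (\<Sum>n<U. \<integral>y. (centred (Suc n) y)\<^sup>2 \<partial>P k) / l\<^sup>2"
proof -
  interpret I: orthogonal_increments M history "capped_increment U"
    by (rule orthogonal_increments_capped)
  define E where "E T = {x \<in> space M. \<exists>t\<in>{1..T}. l < \<bar>capped_sum U t x\<bar>}" for T
  have E_sets: "E T \<in> sets M" for T unfolding E_def by measurable
  have "prob (E T) \<le> (\<integral>x. (capped_sum U T x)\<^sup>2 \<partial>M) / l\<^sup>2" for T
    using I.kolmogorov_maximal_inequality[OF l, of T] unfolding E_def S_capped_increment .
  also have "\<dots> T \<le> (\<Sum>n<U. \<integral>y. (centred (Suc n) y)\<^sup>2 \<partial>P k) / l\<^sup>2" for T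
    by (intro divide_right_mono integral_capped_sum_square_le) simp
  finally have "prob (E T) \<le> (\<Sum>n<U. \<integral>y. (centred (Suc n) y)\<^sup>2 \<partial>P k) / l\<^sup>2" for T .
  moreover have "(\<lambda>T. prob (E T)) \<longlonglongrightarrow> prob (\<Union>T. E T)"
    using E_sets by (intro Lim_measure_incseq) (auto simp: incseq_def E_def)
  ultimately have "prob (\<Union>T. E T) \<le> (\<Sum>n<U. \<integral>y. (centred (Suc n) y)\<^sup>2 \<partial>P k) / l\<^sup>2"
    by (intro LIMSEQ_le_const2) auto
  moreover have "{x \<in> space M. \<exists>t. N t x \<le> U \<and> l < \<bar>centred_sum t x\<bar>} \<subseteq> (\<Union>T. E T)"
  proof safe
    fix x t assume x: "x \<in> space M" "N t x \<le> U" "l < \<bar>centred_sum t x\<bar>"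
    then have "1 \<le> t" using l by (cases t) (auto simp: centred_sum_def)
    then have "x \<in> E t"
      using x capped_sum_eq_centred_sum[OF x(2)] unfolding E_def by (auto intro!: bexI[of _ t])
    then show "x \<in> (\<Union>T. E T)" by blast
  qed
  then have "prob {x \<in> space M. \<exists>t. N t x \<le> U \<and> l < \<bar>centred_sum t x\<bar>} \<le> prob (\<Union>T. E T)"
    using E_sets by (intro finite_measure_mono) auto
  ultimately show ?thesis by linarith
qed

definition trunc_second_moment :: "nat \<Rightarrow> real" where
  "trunc_second_moment n = (\<integral>y. (truncate n y)\<^sup>2 \<partial>P k)"

lemma integrable_truncate_square: "integrable (P k) (\<lambda>y. (truncate n y)\<^sup>2)"
proof (rule Pk.integrable_const_bound[where B="(real n)\<^sup>2"])
  show "AE y in P k. norm ((truncate n y)\<^sup>2) \<le> (real n)\<^sup>2"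
    using power_mono[OF abs_truncate_le abs_ge_zero, of n _ 2] by (simp add: power_abs)
qed (use sets_arm[OF arm] in \<open>simp cong: measurable_cong_sets\<close>)

lemma integral_centred_square_le: "(\<integral>y. (centred n y)\<^sup>2 \<partial>P k) \<le> trunc_second_moment n"
proof -
  have "(\<integral>y. (centred n y)\<^sup>2 \<partial>P k)
      = (\<integral>y. (truncate n y)\<^sup>2 - 2 * trunc_mean n * truncate n y + (trunc_mean n)\<^sup>2 \<partial>P k)"
    by (intro Bochner_Integration.integral_cong refl) (simp add: centred_def power2_diff algebra_simps)
  also have "\<dots> = trunc_second_moment n - (trunc_mean n)\<^sup>2"
    using integrable_truncate_square integrable_truncate
    by (simp add: trunc_second_moment_def trunc_mean_def Pk.prob_space power2_eq_square)
  finally show ?thesis by simp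
qed

lemma trunc_second_moment_mono: "n \<le> n' \<Longrightarrow> trunc_second_moment n \<le> trunc_second_moment n'"
  unfolding trunc_second_moment_def
  by (rule integral_mono[OF integrable_truncate_square integrable_truncate_square])
     (auto simp: truncate_def)

lemma sum_integral_centred_square_le:
  "(\<Sum>n<U. \<integral>y. (centred (Suc n) y)\<^sup>2 \<partial>P k) \<le> real U * trunc_second_moment U"
proof -
  have "(\<Sum>n<U. \<integral>y. (centred (Suc n) y)\<^sup>2 \<partial>P k) \<le> (\<Sum>n<U. trunc_second_moment U)"
    using integral_centred_square_le trunc_second_moment_mono
    by (intro sum_mono) (meson Suc_leI lessThan_iff order_trans)
  then show ?thesis by simp
qed

lemma summable_dyadic_trunc_second_moment:
  "summable (\<lambda>j. trunc_second_moment (2 ^ Suc j) / 2 ^ j)"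
proof (rule summableI_nonneg_bounded)
  fix J
  have "(\<Sum>j<J. trunc_second_moment (2 ^ Suc j) / 2 ^ j)
      = (\<integral>y. (\<Sum>j<J. (1/2) ^ j * (truncate (2 ^ Suc j) y)\<^sup>2) \<partial>P k)"
    using integrable_truncate_square
    by (simp add: trunc_second_moment_def power_one_over Bochner_Integration.integral_sum)
  also have "\<dots> \<le> (\<integral>y. 4 * \<bar>y\<bar> \<partial>P k)"
    using integrable_truncate_square integrable_arm[OF arm] sum_dyadic_truncated_squares_le
    by (intro integral_mono) auto
  finally show "(\<Sum>j<J. trunc_second_moment (2 ^ Suc j) / 2 ^ j) \<le> (\<integral>y. 4 * \<bar>y\<bar> \<partial>P k)" .
qed (simp add: trunc_second_moment_def)

lemma prob_dyadic_block_le: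
  assumes e: "0 < e"
  shows "prob {x \<in> space M. \<exists>t. N t x \<le> 2 ^ Suc j \<and> e * 2 ^ j < \<bar>centred_sum t x\<bar>}
    \<le> 2 / e\<^sup>2 * (trunc_second_moment (2 ^ Suc j) / 2 ^ j)"
proof -
  have "prob {x \<in> space M. \<exists>t. N t x \<le> 2 ^ Suc j \<and> e * 2 ^ j < \<bar>centred_sum t x\<bar>}
      \<le> (\<Sum>n<2 ^ Suc j. \<integral>y. (centred (Suc n) y)\<^sup>2 \<partial>P k) / (e * 2 ^ j)\<^sup>2"
    using e by (intro prob_large_centred_sum_le) simp
  also have "\<dots> \<le> (real (2 ^ Suc j) * trunc_second_moment (2 ^ Suc j)) / (e * 2 ^ j)\<^sup>2"
    by (rule divide_right_mono[OF sum_integral_centred_square_le]) simp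
  also have "\<dots> = 2 / e\<^sup>2 * (trunc_second_moment (2 ^ Suc j) / 2 ^ j)"
    using e by (simp add: field_simps power2_eq_square)
  finally show ?thesis .
qed

text \<open>Borel--Cantelli over the dyadic blocks \<open>2\<^sup>j < N\<^sub>t \<le> 2\<^sup>j\<^sup>+\<^sup>1\<close>.\<close>
lemma AE_eventually_centred_sum_le:
  assumes e: "0 < e"
  shows "AE x in M. \<exists>B. \<forall>t. B < N t x \<longrightarrow> \<bar>centred_sum t x\<bar> \<le> e * real (N t x)"
proof -
  define F where "F j = {x \<in> space M. \<exists>t. N t x \<le> 2 ^ Suc j \<and> e * 2 ^ j < \<bar>centred_sum t x\<bar>}" for j
  have F_sets: "F j \<in> sets M" for j
  proof -
    have "F j = {x \<in> space M. \<exists>t. real (N t x) \<le> 2 ^ Suc j \<and> e * 2 ^ j < \<bar>centred_sum t x\<bar>}"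
      unfolding F_def by (metis (no_types, opaque_lifting) of_nat_le_iff of_nat_numeral of_nat_power)
    also have "\<dots> \<in> sets M" by measurable
    finally show ?thesis .
  qed
  have "summable (\<lambda>j. prob (F j))"
    by (rule summable_comparison_test'[OF summable_mult[OF summable_dyadic_trunc_second_moment,
          of "2 / e\<^sup>2"]]) (use prob_dyadic_block_le[OF e] in \<open>auto simp: F_def\<close>)
  then have "AE x in M. eventually (\<lambda>j. x \<in> space M - F j) sequentially"
    using F_sets by (intro borel_cantelli_AE1) (auto simp: emeasure_eq_measure)
  then show ?thesis
  proof (rule AE_mp, intro AE_I2 impI)
    fix x assume x: "x \<in> space M" and "eventually (\<lambda>j. x \<in> space M - F j) sequentially"
    then obtain J where J: "\<And>j. J \<le> j \<Longrightarrow> x \<notin> F j" by (auto simp: eventually_sequentially)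
    have "\<bar>centred_sum t x\<bar> \<le> e * real (N t x)" if large: "2 ^ J < N t x" for t
    proof -
      obtain j where j: "J \<le> j" "2 ^ j < N t x" "N t x \<le> 2 ^ Suc j"
        using exists_dyadic_bracket[OF large] by blast
      have "\<not> e * 2 ^ j < \<bar>centred_sum t x\<bar>" using J[OF j(1)] x j(3) unfolding F_def by blast
      moreover have "e * 2 ^ j \<le> e * real (N t x)"
        using j(2) e by (intro mult_left_mono) (simp_all add: less_imp_le flip: of_nat_less_iff)
      ultimately show ?thesis by linarith
    qed
    then show "\<exists>B. \<forall>t. B < N t x \<longrightarrow> \<bar>centred_sum t x\<bar> \<le> e * real (N t x)" by blast
  qed
qed

lemma AE_centred_sum_over_pulls_tendsto_0:
  "AE x in M. filterlim (\<lambda>t. N t x) at_top sequentially \<longrightarrow> (\<lambda>t. centred_sum t x / N t x) \<longlonglongrightarrow> 0"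
proof -
  have "AE x in M. \<forall>i::nat. \<exists>B. \<forall>t. B < N t x \<longrightarrow> \<bar>centred_sum t x\<bar> \<le> 1 / Suc i * real (N t x)"
    unfolding AE_all_countable by (intro allI AE_eventually_centred_sum_le) simp
  then show ?thesis
  proof (rule AE_mp, intro AE_I2 impI)
    fix x assume H: "\<forall>i::nat. \<exists>B. \<forall>t. B < N t x \<longrightarrow> \<bar>centred_sum t x\<bar> \<le> 1 / Suc i * real (N t x)"
      and lim: "filterlim (\<lambda>t. N t x) at_top sequentially"
    show "(\<lambda>t. centred_sum t x / N t x) \<longlonglongrightarrow> 0"
    proof (rule LIMSEQ_I)
      fix r :: real assume "0 < r"
      then obtain i :: nat where i: "1 / Suc i < r" by (rule nat_approx_posE)
      obtain B where B: "\<And>t. B < N t x \<Longrightarrow> \<bar>centred_sum t x\<bar> \<le> 1 / Suc i * real (N t x)"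
        using H by blast
      have "eventually (\<lambda>t. Suc B \<le> N t x) sequentially"
        using lim unfolding filterlim_at_top by blast
      then obtain t0 where t0: "\<And>t. t0 \<le> t \<Longrightarrow> B < N t x"
        unfolding eventually_sequentially by (meson Suc_le_lessD)
      have "norm (centred_sum t x / N t x - 0) < r" if "t0 \<le> t" for t
      proof -
        have "0 < real (N t x)" using t0[OF that] by simp
        then have "\<bar>centred_sum t x\<bar> / real (N t x) \<le> 1 / Suc i"
          using B[OF t0[OF that]] by (simp add: divide_le_eq)
        then show ?thesis using i by (simp add: abs_divide)
      qed
      then show "\<exists>no. \<forall>n\<ge>no. norm (centred_sum n x / N n x - 0) < r" by blast
    qed
  qed
qed

definition tail_prob :: "nat \<Rightarrow> real" where
  "tail_prob n = (\<integral>y. (if real n < \<bar>y\<bar> then 1 else 0) \<partial>P k)"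

lemma integrable_exceeds: "integrable (P k) (\<lambda>y. if c < \<bar>y\<bar> then 1 else 0 :: real)"
  using sets_arm[OF arm]
  by (intro Pk.integrable_const_bound[where B=1]) (auto cong: measurable_cong_sets)

lemma sum_tail_prob_le: "(\<Sum>j<J. tail_prob (Suc j)) \<le> (\<integral>y. \<bar>y\<bar> \<partial>P k)"
proof -
  have "(\<Sum>j<J. tail_prob (Suc j)) = (\<integral>y. (\<Sum>j<J. if real (Suc j) < \<bar>y\<bar> then 1 else 0) \<partial>P k)"
    unfolding tail_prob_def using integrable_exceeds
    by (subst Bochner_Integration.integral_sum) auto
  also have "\<dots> \<le> (\<integral>y. \<bar>y\<bar> \<partial>P k)"
    using integrable_exceeds integrable_arm[OF arm] sum_exceeded_levels_le
    by (intro integral_mono) auto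
  finally show ?thesis .
qed

definition truncation_event :: "nat \<Rightarrow> 'a set" where
  "truncation_event s = {x \<in> space M. A (Suc s) x = k \<and> real (N (Suc s) x) < \<bar>Y (Suc s) x\<bar>}"

lemma truncation_event_sets[measurable]: "truncation_event s \<in> sets M"
proof -
  have [measurable]: "Y (Suc s) \<in> borel_measurable M" "A (Suc s) \<in> M \<rightarrow>\<^sub>M count_space UNIV"
    by (simp_all add: Y_measurable A_measurable)
  show ?thesis unfolding truncation_event_def by measurable
qed

lemma indicator_truncation_event:
  "indicator (truncation_event s) x
    = (\<Sum>n<Suc s. nth_pull (Suc s) n x * (if real (Suc n) < \<bar>Y (Suc s) x\<bar> then 1 else 0))"
  if "x \<in> space M"
  unfolding sum_nth_pull using that pulls_le[of A k s x]
  by (auto simp: truncation_event_def indicator_def pulls_Suc)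

lemma measure_truncation_event:
  "measure M (truncation_event s) = (\<Sum>n<Suc s. (\<integral>x. nth_pull (Suc s) n x \<partial>M) * tail_prob (Suc n))"
proof -
  have exceeds: "bounded_rv borel (\<lambda>y. if real n < \<bar>y\<bar> then 1 else 0 :: real)" for n
    by (rule bounded_rvI[where c=1]) auto
  have pull: "bounded_rv (history (Suc s)) (nth_pull (Suc s) n)" for n
    by (rule bounded_rv_nth_pull) auto
  have "measure M (truncation_event s) = (\<integral>x. indicator (truncation_event s) x \<partial>M)"
    by simp
  also have "\<dots>
      = (\<integral>x. (\<Sum>n<Suc s. nth_pull (Suc s) n x * (if real (Suc n) < \<bar>Y (Suc s) x\<bar> then 1 else 0)) \<partial>M)"
    by (intro Bochner_Integration.integral_cong refl indicator_truncation_event)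
  also have "\<dots> = (\<Sum>n<Suc s. \<integral>x. nth_pull (Suc s) n x * (if real (Suc n) < \<bar>Y (Suc s) x\<bar> then 1 else 0) \<partial>M)"
    by (intro Bochner_Integration.integral_sum integrable_bounded_rv)
       (rule bounded_rv_mult[OF bounded_rv_history_imp_bounded_rv[OF pull]
          bounded_rv_compose[OF exceeds Y_measurable]], simp)
  also have "\<dots> = (\<Sum>n<Suc s. (\<integral>x. nth_pull (Suc s) n x \<partial>M) * tail_prob (Suc n))"
    unfolding tail_prob_def
    by (intro sum.cong refl integral_history_mult_reward[OF _ arm pull _ exceeds])
       (auto simp: nth_pull_def)
  finally show ?thesis .
qed

lemma sum_measure_truncation_event_le: "(\<Sum>s<S. measure M (truncation_event s)) \<le> (\<integral>y. \<bar>y\<bar> \<partial>P k)"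
proof -
  have pull: "integrable M (nth_pull s n)" if "1 \<le> s" for s n
    using bounded_rv_nth_pull[OF that order_refl]
    by (intro integrable_bounded_rv bounded_rv_history_imp_bounded_rv)
  have pointwise: "(\<Sum>s<S. \<Sum>n<Suc s. nth_pull (Suc s) n x * tail_prob (Suc n))
      = (\<Sum>j<N S x. tail_prob (Suc j))" for x
  proof -
    have "(\<Sum>s<S. \<Sum>n<Suc s. nth_pull (Suc s) n x * tail_prob (Suc n))
        = (\<Sum>s<S. if A (Suc s) x = k then tail_prob (Suc (N s x)) else 0)"
      unfolding sum_nth_pull by (intro sum.cong refl) (simp add: pulls_le less_Suc_eq_le)
    also have "\<dots> = (\<Sum>s\<in>{Suc 0..S}. if A s x = k then tail_prob (Suc (N (s - 1) x)) else 0)"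
      by (subst sum.atLeast1_atMost_eq) (simp only: diff_Suc_1)
    also have "\<dots> = (\<Sum>j<N S x. tail_prob (Suc j))"
      using sum_over_pulls[where t=S and x=x and f="\<lambda>j. tail_prob (Suc j)"] by simp
    finally show ?thesis .
  qed
  have "(\<Sum>s<S. measure M (truncation_event s))
      = (\<integral>x. (\<Sum>s<S. \<Sum>n<Suc s. nth_pull (Suc s) n x * tail_prob (Suc n)) \<partial>M)"
    using pull by (simp add: measure_truncation_event Bochner_Integration.integral_sum)
  also have "\<dots> \<le> (\<integral>x. (\<integral>y. \<bar>y\<bar> \<partial>P k) \<partial>M)"
  proof (rule integral_mono)
    show "integrable M (\<lambda>x. \<Sum>s<S. \<Sum>n<Suc s. nth_pull (Suc s) n x * tail_prob (Suc n))"
      using pull by (intro Bochner_Integration.integrable_sum integrable_mult_left) auto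
    show "(\<Sum>s<S. \<Sum>n<Suc s. nth_pull (Suc s) n x * tail_prob (Suc n)) \<le> (\<integral>y. \<bar>y\<bar> \<partial>P k)" for x
      unfolding pointwise by (rule sum_tail_prob_le)
  qed simp
  finally show ?thesis by (simp add: prob_space)
qed

definition truncation_error :: "nat \<Rightarrow> 'a \<Rightarrow> real" where
  "truncation_error t x = (\<Sum>s\<in>{1..t}. if A s x = k then Y s x - truncate (N s x) (Y s x) else 0)"

lemma truncation_error_Suc:
  "truncation_error (Suc t) x = truncation_error t x
     + (if A (Suc t) x = k then Y (Suc t) x - truncate (N (Suc t) x) (Y (Suc t) x) else 0)"
proof -
  have "{1..Suc t} = insert (Suc t) {1..t}" by auto
  then show ?thesis unfolding truncation_error_def by simp
qed

text \<open>By Borel--Cantelli only finitely many rewards are ever truncated, so the truncation error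
  is eventually constant.\<close>
lemma AE_truncation_error_over_pulls_tendsto_0:
  "AE x in M. filterlim (\<lambda>t. N t x) at_top sequentially
    \<longrightarrow> (\<lambda>t. truncation_error t x / N t x) \<longlonglongrightarrow> 0"
proof -
  have "summable (\<lambda>s. measure M (truncation_event s))"
    by (rule summableI_nonneg_bounded[OF _ sum_measure_truncation_event_le]) simp
  then have "AE x in M. eventually (\<lambda>s. x \<in> space M - truncation_event s) sequentially"
    by (intro borel_cantelli_AE1) (auto simp: emeasure_eq_measure)
  then show ?thesis
  proof (rule AE_mp, intro AE_I2 impI)
    fix x assume x: "x \<in> space M" and ev: "eventually (\<lambda>s. x \<in> space M - truncation_event s) sequentially"
      and lim: "filterlim (\<lambda>t. N t x) at_top sequentially"
    from ev obtain s0 where s0: "\<And>s. s0 \<le> s \<Longrightarrow> x \<notin> truncation_event s"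
      unfolding eventually_sequentially by blast
    have "truncation_error t x = truncation_error s0 x" if "s0 \<le> t" for t
      using that
    proof (induction t rule: dec_induct)
      case (step t)
      then have "x \<notin> truncation_event t" by (intro s0)
      then have "(if A (Suc t) x = k then Y (Suc t) x - truncate (N (Suc t) x) (Y (Suc t) x) else 0) = 0"
        using x by (auto simp: truncation_event_def truncate_def)
      then show ?case using step.IH by (simp add: truncation_error_Suc)
    qed simp
    then have "(\<lambda>t. truncation_error t x) \<longlonglongrightarrow> truncation_error s0 x"
      by (intro tendsto_eventually eventually_sequentiallyI)
    moreover have "filterlim (\<lambda>t. real (N t x)) at_infinity sequentially"
      using lim unfolding filterlim_sequentially_iff_filterlim_real
      by (rule filterlim_at_top_imp_at_infinity)
    ultimately show "(\<lambda>t. truncation_error t x / N t x) \<longlonglongrightarrow> 0"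
      by (rule tendsto_divide_0)
  qed
qed

lemma trunc_mean_tendsto: "trunc_mean \<longlonglongrightarrow> (\<integral>y. y \<partial>P k)"
  unfolding trunc_mean_def
proof (rule integral_dominated_convergence[where w="\<lambda>y. \<bar>y\<bar>"])
  show "AE y in P k. (\<lambda>n. truncate n y) \<longlonglongrightarrow> y"
  proof (rule AE_I2)
    fix y :: real
    obtain n :: nat where "\<bar>y\<bar> \<le> real n" using real_arch_simple by blast
    then have "eventually (\<lambda>i. truncate i y = y) sequentially"
      unfolding eventually_sequentially truncate_def by (intro exI[of _ n]) auto
    then show "(\<lambda>n. truncate n y) \<longlonglongrightarrow> y" by (rule tendsto_eventually)
  qed
  show "(\<lambda>y. y) \<in> borel_measurable (P k)" "truncate n \<in> borel_measurable (P k)" for n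
    using arm by (simp_all add: measurable_arm_iff_borel)
  show "integrable (P k) (\<lambda>y. \<bar>y\<bar>)" using integrable_arm[OF arm] by simp
  show "AE y in P k. norm (truncate n y) \<le> \<bar>y\<bar>" for n by (simp add: truncate_def)
qed

lemma mean_trunc_mean_tendsto:
  assumes "filterlim n at_top sequentially"
  shows "(\<lambda>t. (\<Sum>j<n t. trunc_mean (Suc j)) / real (n t)) \<longlonglongrightarrow> (\<integral>y. y \<partial>P k)"
proof -
  have "(\<lambda>j. trunc_mean (Suc j)) \<longlonglongrightarrow> (\<integral>y. y \<partial>P k)"
    using trunc_mean_tendsto by (rule LIMSEQ_Suc)
  then have "(\<lambda>m. (\<Sum>j<m. trunc_mean (Suc j)) / real m) \<longlonglongrightarrow> (\<integral>y. y \<partial>P k)"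
    by (rule cesaro_mean_tendsto)
  from filterlim_compose[OF this assms] show ?thesis by (simp add: o_def)
qed

lemma rsum_decomposition:
  "rsum A Y k t x = truncation_error t x + centred_sum t x + (\<Sum>j<N t x. trunc_mean (Suc j))"
proof -
  have "(\<Sum>s\<in>{1..t}. if A s x = k then trunc_mean (N s x) else 0) = (\<Sum>j<N t x. trunc_mean (Suc j))"
  proof -
    have "(\<Sum>s\<in>{1..t}. if A s x = k then trunc_mean (N s x) else 0)
        = (\<Sum>s\<in>{1..t}. if A s x = k then trunc_mean (Suc (N (s - 1) x)) else 0)"
      using pulls_pred[of _ x] by (intro sum.cong refl) simp
    also have "\<dots> = (\<Sum>j<N t x. trunc_mean (Suc j))" by (rule sum_over_pulls)
    finally show ?thesis .
  qed
  moreover have "rsum A Y k t x = (\<Sum>s\<in>{1..t}. (if A s x = k then Y s x - truncate (N s x) (Y s x) else 0)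
      + (if A s x = k then centred (N s x) (Y s x) else 0) + (if A s x = k then trunc_mean (N s x) else 0))"
    unfolding rsum_def by (intro sum.cong refl) (simp add: centred_def)
  ultimately show ?thesis
    unfolding truncation_error_def centred_sum_def by (simp add: sum.distrib)
qed

theorem AE_muhat_tendsto:
  "AE x in M. filterlim (\<lambda>t. N t x) at_top sequentially \<longrightarrow> (\<lambda>t. muhat A Y k t x) \<longlonglongrightarrow> (\<integral>y. y \<partial>P k)"
  using AE_truncation_error_over_pulls_tendsto_0 AE_centred_sum_over_pulls_tendsto_0
proof eventually_elim
  case (elim x)
  show ?case
  proof
    assume lim: "filterlim (\<lambda>t. N t x) at_top sequentially"
    have "(\<lambda>t. truncation_error t x / N t x + centred_sum t x / N t x
        + (\<Sum>j<N t x. trunc_mean (Suc j)) / N t x) \<longlonglongrightarrow> 0 + 0 + (\<integral>y. y \<partial>P k)"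
      using elim lim mean_trunc_mean_tendsto[OF lim] by (intro tendsto_add) auto
    then show "(\<lambda>t. muhat A Y k t x) \<longlonglongrightarrow> (\<integral>y. y \<partial>P k)"
      by (simp add: muhat_def rsum_decomposition add_divide_distrib)
  qed
qed

end

context bandit
begin

lemma AE_uniform_in_pulls:
  "AE x in M. \<forall>e>0. eventually (\<lambda>c. \<forall>k\<in>{1..kstar}. \<forall>t.
     c \<le> real (pulls A k t x) \<longrightarrow> \<bar>muhat A Y k t x - (\<integral>y. y \<partial>P k)\<bar> \<le> e) at_top"
proof -
  have "AE x in M. \<forall>k\<in>{1..kstar}. filterlim (\<lambda>t. pulls A k t x) at_top sequentially
      \<longrightarrow> (\<lambda>t. muhat A Y k t x) \<longlonglongrightarrow> (\<integral>y. y \<partial>P k)"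
  proof (rule AE_finite_allI)
    fix k assume "k \<in> {1..kstar}"
    then interpret bandit_arm M kstar P W MW A Y k by unfold_locales
    show "AE x in M. filterlim (\<lambda>t. pulls A k t x) at_top sequentially
        \<longrightarrow> (\<lambda>t. muhat A Y k t x) \<longlonglongrightarrow> (\<integral>y. y \<partial>P k)"
      by (rule AE_muhat_tendsto)
  qed simp
  then show ?thesis
    by eventually_elim
       (auto intro!: eventually_ball_finite eventually_uniform_in_count monoI pulls_mono)
qed

lemma AE_uniform_in_pulls_at_random_arm:
  assumes "\<And>t x. x \<in> space M \<Longrightarrow> \<kappa> t x \<in> {1..kstar}"
  shows "AE x in M. \<forall>e>0. eventually (\<lambda>c. \<forall>t. c \<le> real (pulls A (\<kappa> t x) (\<tau> t x) x)
    \<longrightarrow> \<bar>muhat A Y (\<kappa> t x) (\<tau> t x) x - (\<integral>y. y \<partial>P (\<kappa> t x))\<bar> \<le> e) at_top"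
  using AE_uniform_in_pulls AE_space
proof eventually_elim
  case (elim x)
  show ?case
  proof (intro allI impI)
    fix e :: real assume "0 < e"
    with elim(1) have "eventually (\<lambda>c. \<forall>k\<in>{1..kstar}. \<forall>s. c \<le> real (pulls A k s x)
        \<longrightarrow> \<bar>muhat A Y k s x - (\<integral>y. y \<partial>P k)\<bar> \<le> e) at_top"
      by blast
    then show "eventually (\<lambda>c. \<forall>t. c \<le> real (pulls A (\<kappa> t x) (\<tau> t x) x)
        \<longrightarrow> \<bar>muhat A Y (\<kappa> t x) (\<tau> t x) x - (\<integral>y. y \<partial>P (\<kappa> t x))\<bar> \<le> e) at_top"
      by (rule eventually_mono) (use assms[OF elim(2)] in blast)
  qed
qed

end

theorem proposition1:
  fixes M :: "'a measure" and kstar :: nat and P :: "nat \<Rightarrow> real measure"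
    and W :: "'a \<Rightarrow> 'w" and MW :: "'w measure"
    and A :: "nat \<Rightarrow> 'a \<Rightarrow> nat" and Y :: "nat \<Rightarrow> 'a \<Rightarrow> real"
    and \<tau> :: "nat \<Rightarrow> 'a \<Rightarrow> nat" and \<kappa> :: "nat \<Rightarrow> 'a \<Rightarrow> nat"
  defines "\<mu> \<equiv> (\<lambda>k. integral\<^sup>L (P k) (\<lambda>y. y))"
  assumes model: "bandit_model M kstar P W MW A Y"
    and tau_meas: "\<And>t. \<tau> t \<in> M \<rightarrow>\<^sub>M count_space UNIV"
    and tau_mono: "\<And>t x. x \<in> space M \<Longrightarrow> \<tau> t x \<le> \<tau> (Suc t) x"
    and kappa_meas: "\<And>t. \<kappa> t \<in> M \<rightarrow>\<^sub>M count_space UNIV"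
    and kappa_range: "\<And>t x. x \<in> space M \<Longrightarrow> \<kappa> t x \<in> {1..kstar}"
  shows
    "((AE x in M. filterlim (\<lambda>t. real (pulls A (\<kappa> t x) (\<tau> t x) x)) at_top sequentially)
        \<longrightarrow> (AE x in M. (\<lambda>t. muhat A Y (\<kappa> t x) (\<tau> t x) x - \<mu> (\<kappa> t x)) \<longlonglongrightarrow> 0))
     \<and>
     ((\<forall>c::real. (\<lambda>t. measure M {x \<in> space M. real (pulls A (\<kappa> t x) (\<tau> t x) x) \<le> c}) \<longlonglongrightarrow> 0)
        \<longrightarrow> (\<forall>\<epsilon>>0. (\<lambda>t. measure M {x \<in> space M. \<bar>muhat A Y (\<kappa> t x) (\<tau> t x) x - \<mu> (\<kappa> t x)\<bar> > \<epsilon>}) \<longlonglongrightarrow> 0))"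
proof -
  interpret bandit M kstar P W MW A Y by (rule bandit.intro[OF model])
  note uniform = AE_uniform_in_pulls_at_random_arm[OF kappa_range, where \<tau>=\<tau>]
  have [measurable]: "(\<lambda>x. real (pulls A (\<kappa> t x) (\<tau> t x) x)) \<in> borel_measurable M" for t
    by (rule measurable_random_index[where h="\<lambda>i n x. real (pulls A i n x)", OF _ kappa_meas tau_meas])
       measurable
  have [measurable]: "(\<lambda>x. muhat A Y (\<kappa> t x) (\<tau> t x) x - (\<integral>y. y \<partial>P (\<kappa> t x))) \<in> borel_measurable M" for t
    by (rule measurable_random_index[where h="\<lambda>i n x. muhat A Y i n x - (\<integral>y. y \<partial>P i)",
          OF _ kappa_meas tau_meas]) measurable
  show ?thesis
    using AE_tendsto_0_if_uniform_in_count[OF uniform] prob_tendsto_0_if_uniform_in_count[OF uniform]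
    unfolding \<mu>_def by auto
qed

end
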